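(* Let $V, W$ be real Banach spaces, let $f \in C^1([0,\infty) \times V, V)$, and let $\Theta \in C^1([0,\infty) \times V, GL(V,W))$ satisfy $$\sup_{t \ge 0,\, u \in V} \max\big(\|\Theta(t,u)\|, \|\Theta(t,u)^{-1}\|\big) = C < \infty.$$ For $t \ge 0$ and $u \in V$, let $$G(t,u) := \partial_t \Theta(t,u) + D_u\Theta(t,u)[f(t,u)] + \Theta(t,u)\, D_u f(t,u) \in \mathcal{B}(V,W),$$ and suppose that for some $\lambda \in \mathbb{R}$, $$\sup_{t \ge 0,\, u \in V}\; M\big(G(t,u)\, \Theta(t,u)^{-1}\big) \le \lambda,$$ where $M$ is computed in $W$. Then any two solutions $u_1, u_2$ of $\dot u = f(t,u)$ satisfy $$\|u_1(t) - u_2(t)\| \le C^2 e^{\lambda t} \|u_1(0) - u_2(0)\| \quad \text{for all } t \ge 0.$$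
   Context: For a real Banach space $X$, the right semi-inner product is $(u,v)_+ := \|u\| \lim_{h \to 0^+} \frac{\|u + hv\| - \|u\|}{h}$. For a bounded linear operator $A: X \to X$, $M(A) := \sup_{v \ne 0} \frac{(v, Av)_+}{\|v\|^2}$. $GL(V,W)$ is the set of bijective bounded linear operators $V \to W$. $D$ denotes the Fréchet derivative, and $D_u\Theta(t,u)[h]$ is the derivative of $\Theta$ in $u$ applied to $h$. The operator $G(t,u)$ is the derivative along solutions: $\frac{d}{dt}[\Theta(t,u(t))\,\delta u(t)] = G(t,u(t))\,\delta u(t)$ whenever $\dot{\delta u} = D_u f(t,u(t))\,\delta u$. Solutions are continuously differentiable curves $[0,\infty) \to V$ satisfying the equation. *)

theory Defs
  imports "HOL-Analysis.Analysis"
begin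

definition rsip :: "'a::real_normed_vector \<Rightarrow> 'a \<Rightarrow> real" where
  "rsip u v = norm u * Lim (at_right 0) (\<lambda>h::real. (norm (u + h *\<^sub>R v) - norm u) / h)"

definition logM :: "('a::real_normed_vector \<Rightarrow> 'a) \<Rightarrow> real" where
  "logM A = (SUP v\<in>-{0}. rsip v (A v) / (norm v)\<^sup>2)"

text \<open>G(t,u) = d_t Theta(t,u) + D_u Theta(t,u)[f(t,u)] + Theta(t,u) o D_u f(t,u),
  where Theta' and f' are the full Frechet derivatives in (t,u).\<close>
definition Gop ::
  "(real \<times> 'v::real_normed_vector \<Rightarrow> 'v)
   \<Rightarrow> (real \<times> 'v \<Rightarrow> ('v \<Rightarrow>\<^sub>L 'w::real_normed_vector))
   \<Rightarrow> (real \<times> 'v \<Rightarrow> (real \<times> 'v) \<Rightarrow>\<^sub>L ('v \<Rightarrow>\<^sub>L 'w))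
   \<Rightarrow> (real \<times> 'v \<Rightarrow> (real \<times> 'v) \<Rightarrow>\<^sub>L 'v)
   \<Rightarrow> real \<Rightarrow> 'v \<Rightarrow> 'v \<Rightarrow> 'w" where
  "Gop f \<Theta> \<Theta>' f' t u = (\<lambda>v.
      blinfun_apply (blinfun_apply (\<Theta>' (t,u)) (1, 0)) v
    + blinfun_apply (blinfun_apply (\<Theta>' (t,u)) (0, f (t,u))) v
    + blinfun_apply (\<Theta> (t,u)) (blinfun_apply (f' (t,u)) (0, v)))"

end

theory Submission
  imports Defs
begin

text \<open>Consider the initial values \<open>u\<^sub>2(0) + s (u\<^sub>1(0) - u\<^sub>2(0))\<close>, \<open>s \<in> [0, 1]\<close>. For two
  solutions \<open>x\<close>, \<open>y\<close> the vector \<open>w = \<Theta>(t, x) (y - x)\<close> has derivative \<open>G \<Theta>\<^sup>-\<^sup>1 w\<close> plus \<open>\<Theta>\<close>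
  applied to the linearization error of \<open>f\<close>, so \<open>M(G \<Theta>\<^sup>-\<^sup>1) \<le> \<lambda>\<close> bounds the right Dini
  derivative of \<open>\<parallel>w\<parallel>\<close> by \<open>(\<lambda> + C\<^sup>2\<epsilon>) \<parallel>w\<parallel>\<close>, where \<open>\<epsilon>\<close> is the oscillation of \<open>D\<^sub>uf\<close>
  between \<open>x\<close> and \<open>y\<close>. Gronwall and \<open>\<parallel>\<Theta>\<parallel>, \<parallel>\<Theta>\<^sup>-\<^sup>1\<parallel> \<le> C\<close> then give
  \<open>\<parallel>y - x\<parallel> \<le> C\<^sup>2 exp ((\<lambda> + C\<^sup>2\<epsilon>) t) \<parallel>y(0) - x(0)\<parallel>\<close>; summing over a fine partition of
  \<open>[0, 1]\<close> and letting \<open>\<epsilon> \<rightarrow> 0\<close> proves the theorem.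

  Solutions for the intermediate initial values are not given and must be constructed: the
  set of \<open>s\<close> for which they exist on \<open>[0, t]\<close> is an interval containing \<open>0\<close>, the estimate
  makes the solutions converge uniformly at its right end, and Picard iteration in a tube
  around the limit extends the interval beyond it.\<close>

section \<open>The bounded inverse theorem\<close>

lemma Baire_closed_cover_interior:
  fixes F :: "nat \<Rightarrow> 'a::banach set"
  assumes "\<And>n. closed (F n)" "(\<Union>n. F n) = UNIV"
  shows "\<exists>n. interior (F n) \<noteq> {}"
proof (rule ccontr)
  assume "\<not> ?thesis"
  then have "\<And>S. S \<in> range F \<Longrightarrow> closedin Met_TC.mtopology S \<and> Met_TC.mtopology interior_of S = {}"
    using assms(1) by (auto simp: interior_of_def interior_def)
  then have "Met_TC.mtopology interior_of \<Union>(range F) = {}"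
    by (intro Met_TC.metric_Baire_category_alt) (auto simp: complete_UNIV)
  then show False
    using assms(2) by (simp add: interior_of_def interior_def) (metis UNIV_I open_UNIV)
qed

lemma linear_inv:
  assumes "linear T" "bij T"
  shows "linear (inv T)"
proof -
  have T_inv: "T (inv T y) = y" for y
    using assms(2) by (simp add: bij_is_surj surj_f_inv_f)
  have inv_T: "inv T (T x) = x" for x
    using assms(2) by (simp add: bij_is_inj)
  show ?thesis
  proof (rule linearI)
    fix a b
    have "inv T (a + b) = inv T (T (inv T a) + T (inv T b))"
      by (simp add: T_inv)
    then show "inv T (a + b) = inv T a + inv T b"
      using linear_add[OF assms(1)] inv_T by metis
  next
    fix c a
    have "inv T (c *\<^sub>R a) = inv T (c *\<^sub>R T (inv T a))"
      by (simp add: T_inv)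
    then show "inv T (c *\<^sub>R a) = c *\<^sub>R inv T a"
      using linear_scale[OF assms(1)] inv_T by metis
  qed
qed

lemma approx_from_closure_image_ball:
  assumes T: "bounded_linear T" and ball: "ball y0 r \<subseteq> closure (T ` cball 0 R)"
    and "norm y < r" "e > 0"
  shows "\<exists>x. norm x \<le> 2 * R \<and> norm (T x - y) < e"
proof -
  interpret T: bounded_linear T by (fact T)
  have "y0 + y \<in> closure (T ` cball 0 R)" "y0 \<in> closure (T ` cball 0 R)"
    using ball \<open>norm y < r\<close> le_less_trans[OF norm_ge_zero \<open>norm y < r\<close>] by (auto simp: dist_norm)
  then have "\<forall>\<epsilon>>0. \<exists>z\<in>T ` cball 0 R. dist z (y0 + y) < \<epsilon>"
    "\<forall>\<epsilon>>0. \<exists>z\<in>T ` cball 0 R. dist z y0 < \<epsilon>"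
    unfolding closure_approachable by simp_all
  then have "\<exists>z\<in>T ` cball 0 R. dist z (y0 + y) < e/2" "\<exists>z\<in>T ` cball 0 R. dist z y0 < e/2"
    using \<open>e > 0\<close> half_gt_zero by blast+
  then obtain x1 x2 where x: "x1 \<in> cball 0 R" "dist (T x1) (y0 + y) < e/2"
    "x2 \<in> cball 0 R" "dist (T x2) y0 < e/2"
    by blast
  have "norm (x1 - x2) \<le> 2 * R"
    using norm_triangle_ineq4[of x1 x2] x by simp
  moreover have "T (x1 - x2) - y = (T x1 - (y0 + y)) - (T x2 - y0)"
    by (simp add: T.diff algebra_simps)
  then have "norm (T (x1 - x2) - y) \<le> norm (T x1 - (y0 + y)) + norm (T x2 - y0)"
    by (metis norm_triangle_ineq4)
  then have "norm (T (x1 - x2) - y) < e"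
    using x by (simp add: dist_norm)
  ultimately show ?thesis by blast
qed

text \<open>The core of the open mapping theorem: by Baire, the closure of the image of some ball
  contains a ball, so every \<open>y\<close> is approximated to within \<open>norm y / 2\<close> by the image of a
  vector of norm \<open>O(norm y)\<close>.\<close>

lemma surj_bounded_linear_approx_preimage:
  fixes T :: "'a::banach \<Rightarrow> 'b::banach"
  assumes T: "bounded_linear T" "surj T"
  obtains K where "K \<ge> 0" "\<And>y. \<exists>x. norm x \<le> K * norm y \<and> norm (T x - y) \<le> norm y / 2"
proof -
  interpret T: bounded_linear T by (fact T(1))
  define F where "F n = closure (T ` cball 0 (real n))" for n
  have "\<exists>n. interior (F n) \<noteq> {}"
  proof (rule Baire_closed_cover_interior)
    show "closed (F n)" for n
      unfolding F_def by simp
    have "y \<in> (\<Union>n. F n)" for y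
    proof -
      obtain x where "y = T x"
        using T(2) by (metis surjD)
      then have "y \<in> F (nat \<lceil>norm x\<rceil>)"
        using closure_subset unfolding F_def by fastforce
      then show ?thesis by blast
    qed
    then show "(\<Union>n. F n) = UNIV"
      by blast
  qed
  then obtain n y0 where "y0 \<in> interior (F n)"
    by blast
  then obtain r where "r > 0" "ball y0 r \<subseteq> interior (F n)"
    using open_contains_ball open_interior by blast
  then have r: "r > 0" "ball y0 r \<subseteq> F n"
    using interior_subset by auto
  have approx: "\<exists>x. norm x \<le> 2 * real n \<and> norm (T x - y) < e" if "norm y < r" "e > 0" for y e
    using approx_from_closure_image_ball[OF T(1) r(2)[unfolded F_def] that] .
  show ?thesis
  proof
    show "4 * real n / r \<ge> 0"
      using r by simp
    fix y :: 'b
    show "\<exists>x. norm x \<le> 4 * real n / r * norm y \<and> norm (T x - y) \<le> norm y / 2"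
    proof (cases "y = 0")
      case True
      then show ?thesis by (intro exI[of _ 0]) simp
    next
      case False
      define c where "c = r / (2 * norm y)"
      have c: "c > 0" "norm (c *\<^sub>R y) < r"
        unfolding c_def using r False by simp_all
      then obtain x where x: "norm x \<le> 2 * real n" "norm (T x - c *\<^sub>R y) < c * (norm y / 2)"
        using approx False by (meson mult_pos_pos zero_less_norm_iff half_gt_zero)
      have "norm ((1/c) *\<^sub>R x) \<le> 4 * real n / r * norm y"
        using x(1) c False r by (simp add: c_def field_simps)
      moreover have "norm (T ((1/c) *\<^sub>R x) - y) \<le> norm y / 2"
      proof -
        have "T ((1/c) *\<^sub>R x) - y = (1/c) *\<^sub>R (T x - c *\<^sub>R y)"
          using c by (simp add: T.scaleR algebra_simps)
        then have "norm (T ((1/c) *\<^sub>R x) - y) = norm (T x - c *\<^sub>R y) / c"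
          using c by simp
        also have "\<dots> < norm y / 2"
          using x(2) c by (metis mult.commute pos_divide_less_eq)
        finally show ?thesis
          by simp
      qed
      ultimately show ?thesis by blast
    qed
  qed
qed

text \<open>Successive approximation: correct the residual \<open>y - T x\<close> again and again; the residuals
  halve, so the corrections form a geometric series.\<close>

lemma approx_preimage_imp_preimage:
  fixes T :: "'a::banach \<Rightarrow> 'b::real_normed_vector"
  assumes T: "bounded_linear T" and K: "K \<ge> 0"
    and approx: "\<And>y. \<exists>x. norm x \<le> K * norm y \<and> norm (T x - y) \<le> norm y / 2"
  shows "\<exists>x. T x = y \<and> norm x \<le> 2 * K * norm y"
proof -
  interpret T: bounded_linear T by (fact T)
  obtain g where g: "\<And>y. norm (g y) \<le> K * norm y" "\<And>y. norm (T (g y) - y) \<le> norm y / 2"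
    using approx by metis
  define r where "r k = ((\<lambda>z. z - T (g z)) ^^ k) y" for k
  have r_Suc: "r (Suc k) = r k - T (g (r k))" for k
    unfolding r_def by simp
  have r_le: "norm (r k) \<le> norm y / 2 ^ k" for k
  proof (induction k)
    case (Suc k)
    have "norm (r (Suc k)) \<le> norm (r k) / 2"
      using g(2)[of "r k"] by (simp add: r_Suc norm_minus_commute)
    with Suc show ?case by simp
  qed (simp add: r_def)
  define x where "x k = g (r k)" for k
  have x_le: "norm (x k) \<le> K * norm y * (1/2) ^ k" for k
  proof -
    have "norm (x k) \<le> K * norm (r k)"
      unfolding x_def by (rule g(1))
    also have "\<dots> \<le> K * (norm y / 2 ^ k)"
      using r_le K by (rule mult_left_mono)
    finally show ?thesis
      by (simp add: power_one_over)
  qed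
  have geom: "summable (\<lambda>k. K * norm y * (1/2::real) ^ k)"
    by (intro summable_mult summable_geometric) simp
  have norm_summable: "summable (\<lambda>k. norm (x k))"
    by (rule summable_comparison_test[OF _ geom]) (use x_le in simp)
  have "r \<longlonglongrightarrow> 0"
  proof (rule tendsto_norm_zero_cancel, rule Lim_null_comparison)
    show "\<forall>\<^sub>F k in sequentially. norm (norm (r k)) \<le> norm y / 2 ^ k"
      using r_le by simp
  qed (intro LIMSEQ_divide_realpow_zero; simp)
  then have "(\<lambda>N. y - r N) \<longlonglongrightarrow> y - 0"
    by (intro tendsto_intros)
  moreover have "(\<Sum>k<N. T (x k)) = y - r N" for N
    by (induction N) (simp_all add: r_def x_def)
  ultimately have "(\<lambda>k. T (x k)) sums y"
    unfolding sums_def by simp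
  then have "T (suminf x) = y"
    using T.suminf[OF summable_norm_cancel[OF norm_summable]] by (simp add: sums_iff)
  moreover have "norm (suminf x) \<le> 2 * K * norm y"
  proof -
    have "norm (suminf x) \<le> (\<Sum>k. norm (x k))"
      by (rule summable_norm[OF norm_summable])
    also have "\<dots> \<le> (\<Sum>k. K * norm y * (1/2::real) ^ k)"
      by (rule suminf_le[OF _ norm_summable geom]) (use x_le in simp)
    finally show ?thesis
      by (simp add: suminf_mult suminf_geometric)
  qed
  ultimately show ?thesis by blast
qed

lemma bounded_linear_inv:
  fixes T :: "'a::banach \<Rightarrow> 'b::banach"
  assumes T: "bounded_linear T" and bij: "bij T"
  shows "bounded_linear (inv T)"
proof -
  obtain K where K: "K \<ge> 0" "\<And>y. \<exists>x. norm x \<le> K * norm y \<and> norm (T x - y) \<le> norm y / 2"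
    using surj_bounded_linear_approx_preimage[OF T bij_is_surj[OF bij]] by blast
  have "norm (inv T y) \<le> norm y * (2 * K)" for y
    using approx_preimage_imp_preimage[OF T K, of y] bij
    by (auto simp: bij_is_inj mult.commute)
  moreover have "linear (inv T)"
    by (rule linear_inv[OF bounded_linear.linear[OF T] bij])
  ultimately show ?thesis
    by (intro bounded_linear_intro[where K="2 * K"]) (simp_all add: linear_add linear_scale)
qed

section \<open>The right semi-inner product\<close>

definition norm_diff_quot :: "'a::real_normed_vector \<Rightarrow> 'a \<Rightarrow> real \<Rightarrow> real" where
  "norm_diff_quot u v h = (norm (u + h *\<^sub>R v) - norm u) / h"

text \<open>Convexity of the norm makes the difference quotient monotone in \<open>h\<close>, so the one-sided
  limit in \<^const>\<open>rsip\<close> exists and is an infimum.\<close>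

lemma norm_diff_quot_mono:
  assumes "0 < h1" "h1 \<le> h2"
  shows "norm_diff_quot u v h1 \<le> norm_diff_quot u v h2"
proof -
  define c where "c = h1 / h2"
  have c: "0 < c" "c \<le> 1"
    unfolding c_def using assms by auto
  have "u + h1 *\<^sub>R v = (1 - c) *\<^sub>R u + c *\<^sub>R (u + h2 *\<^sub>R v)"
    unfolding c_def using assms by (simp add: algebra_simps)
  then have "norm (u + h1 *\<^sub>R v) \<le> (1 - c) * norm u + c * norm (u + h2 *\<^sub>R v)"
    using norm_triangle_ineq[of "(1 - c) *\<^sub>R u" "c *\<^sub>R (u + h2 *\<^sub>R v)"] c by simp
  then have "norm (u + h1 *\<^sub>R v) - norm u \<le> c * (norm (u + h2 *\<^sub>R v) - norm u)"
    by (simp add: algebra_simps)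
  then show ?thesis
    unfolding norm_diff_quot_def c_def using assms by (simp add: field_simps)
qed

lemma abs_norm_diff_quot_le:
  assumes "0 < h"
  shows "\<bar>norm_diff_quot u v h\<bar> \<le> norm v"
proof -
  have "\<bar>norm (u + h *\<^sub>R v) - norm u\<bar> \<le> norm v * h"
    using norm_triangle_ineq3[of "u + h *\<^sub>R v" u] assms by (simp add: mult.commute)
  then show ?thesis
    unfolding norm_diff_quot_def using assms by (simp add: abs_divide pos_divide_le_eq)
qed

lemma bdd_below_norm_diff_quot: "bdd_below (norm_diff_quot u v ` {0<..})"
proof (rule bdd_belowI)
  fix x assume "x \<in> norm_diff_quot u v ` {0<..}"
  then obtain h where "h > 0" "x = norm_diff_quot u v h"
    by auto
  then show "- norm v \<le> x"
    using abs_norm_diff_quot_le[of h u v] by linarith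
qed

lemma norm_diff_quot_tendsto_Inf:
  "(norm_diff_quot u v \<longlongrightarrow> Inf (norm_diff_quot u v ` {0<..})) (at_right 0)"
proof (rule order_tendstoI)
  fix a assume "a < Inf (norm_diff_quot u v ` {0<..})"
  then have "a < norm_diff_quot u v h" if "h > 0" for h
    using cInf_lower[OF _ bdd_below_norm_diff_quot, of "norm_diff_quot u v h"] that by force
  then show "\<forall>\<^sub>F h in at_right 0. a < norm_diff_quot u v h"
    by (auto simp: eventually_at_right_field intro!: exI[of _ 1])
next
  fix a assume "Inf (norm_diff_quot u v ` {0<..}) < a"
  then obtain h0 where h0: "h0 > 0" "norm_diff_quot u v h0 < a"
    using cInf_lessD[of "norm_diff_quot u v ` {0<..}" a] by auto
  then have "norm_diff_quot u v h < a" if "0 < h" "h < h0" for h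
    using norm_diff_quot_mono[of h h0 u v] that by simp
  then show "\<forall>\<^sub>F h in at_right 0. norm_diff_quot u v h < a"
    using h0 by (auto simp: eventually_at_right_field)
qed

lemma rsip_eq_Inf: "rsip u v = norm u * Inf (norm_diff_quot u v ` {0<..})"
  using tendsto_Lim[OF trivial_limit_at_right_real norm_diff_quot_tendsto_Inf[of u v]]
  unfolding rsip_def norm_diff_quot_def by simp

lemma Inf_norm_diff_quot_add_le:
  "Inf (norm_diff_quot u (a + b) ` {0<..}) \<le> Inf (norm_diff_quot u a ` {0<..}) + norm b"
proof (rule tendsto_le[OF trivial_limit_at_right_real _ norm_diff_quot_tendsto_Inf])
  show "((\<lambda>h. norm_diff_quot u a h + norm b) \<longlongrightarrow> Inf (norm_diff_quot u a ` {0<..}) + norm b)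
      (at_right 0)"
    by (intro tendsto_intros norm_diff_quot_tendsto_Inf)
  have "norm_diff_quot u (a + b) h \<le> norm_diff_quot u a h + norm b" if "h > 0" for h
  proof -
    have "norm (u + h *\<^sub>R (a + b)) \<le> norm (u + h *\<^sub>R a) + h * norm b"
      using norm_triangle_ineq[of "u + h *\<^sub>R a" "h *\<^sub>R b"] that by (simp add: algebra_simps)
    then show ?thesis
      unfolding norm_diff_quot_def using that by (simp add: field_simps)
  qed
  then show "\<forall>\<^sub>F h in at_right 0. norm_diff_quot u (a + b) h \<le> norm_diff_quot u a h + norm b"
    by (auto simp: eventually_at_right_field intro!: exI[of _ 1])
qed

lemma rsip_le_norm_mult: "rsip u v \<le> norm u * norm v"
proof -
  have "Inf (norm_diff_quot u v ` {0<..}) \<le> norm_diff_quot u v 1"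
    by (rule cInf_lower[OF _ bdd_below_norm_diff_quot]) simp
  also have "\<dots> \<le> norm v"
    using abs_norm_diff_quot_le[of 1 u v] by simp
  finally show ?thesis
    unfolding rsip_eq_Inf by (rule mult_left_mono) simp
qed

lemma rsip_add_le: "rsip u (a + b) \<le> rsip u a + norm u * norm b"
  using mult_left_mono[OF Inf_norm_diff_quot_add_le norm_ge_zero[of u]]
  unfolding rsip_eq_Inf by (simp add: algebra_simps)

lemma rsip_le_of_logM_le:
  fixes A :: "'a::real_normed_vector \<Rightarrow> 'a"
  assumes "bounded_linear A" "logM A \<le> lam" "w \<noteq> 0"
  shows "rsip w (A w) \<le> lam * (norm w)\<^sup>2"
proof -
  obtain K where K: "\<And>x. norm (A x) \<le> norm x * K"
    using bounded_linear.bounded[OF assms(1)] by blast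
  have "bdd_above ((\<lambda>v. rsip v (A v) / (norm v)\<^sup>2) ` (- {0}))"
  proof (rule bdd_aboveI2[where M=K])
    fix v :: 'a
    assume "v \<in> - {0}"
    moreover have "rsip v (A v) \<le> norm v * (norm v * K)"
      using rsip_le_norm_mult[of v "A v"] mult_left_mono[OF K[of v] norm_ge_zero[of v]] by linarith
    ultimately show "rsip v (A v) / (norm v)\<^sup>2 \<le> K"
      by (simp add: divide_le_eq power2_eq_square algebra_simps)
  qed
  then have "rsip w (A w) / (norm w)\<^sup>2 \<le> logM A"
    unfolding logM_def by (rule cSUP_upper[rotated]) (use assms in simp)
  then have "rsip w (A w) \<le> logM A * (norm w)\<^sup>2"
    using assms(3) by (simp add: divide_le_eq)
  also have "\<dots> \<le> lam * (norm w)\<^sup>2"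
    using assms(2) by (rule mult_right_mono) simp
  finally show ?thesis .
qed

section \<open>Gronwall's inequality for Dini derivatives\<close>

lemma has_vector_derivative_right_approx:
  fixes w :: "real \<Rightarrow> 'a::real_normed_vector"
  assumes der: "(w has_vector_derivative w') (at t within {t..b})" and "t < b" and "e > 0"
  shows "\<forall>\<^sub>F h in at_right 0. norm (w (t + h) - w t - h *\<^sub>R w') \<le> e * h"
proof -
  obtain d where d: "d > 0" "\<And>y. y \<in> {t..b} \<Longrightarrow> norm (y - t) < d \<Longrightarrow>
      norm (w y - w t - (y - t) *\<^sub>R w') \<le> e * norm (y - t)"
    using der \<open>e > 0\<close> unfolding has_vector_derivative_def has_derivative_within_alt by blast
  show ?thesis
    unfolding eventually_at_right_field
  proof (intro exI[of _ "min d (b - t)"] conjI allI impI)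
    show "0 < min d (b - t)"
      using d(1) \<open>t < b\<close> by simp
    fix h :: real assume "0 < h" "h < min d (b - t)"
    then show "norm (w (t + h) - w t - h *\<^sub>R w') \<le> e * h"
      using d(2)[of "t + h"] by simp
  qed
qed

lemma norm_right_Dini_le:
  fixes w :: "real \<Rightarrow> 'a::real_normed_vector"
  assumes der: "(w has_vector_derivative w') (at t within {t..b})" and "t < b"
    and rsip_le: "w t \<noteq> 0 \<Longrightarrow> rsip (w t) w' \<le> c * norm (w t)"
    and norm_le: "w t = 0 \<Longrightarrow> norm w' \<le> c"
    and "e > 0"
  shows "\<forall>\<^sub>F h in at_right 0. norm (w (t + h)) \<le> norm (w t) + h * (c + e)"
proof -
  have approx: "\<forall>\<^sub>F h in at_right 0. norm (w (t + h) - w t - h *\<^sub>R w') \<le> e/2 * h"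
    by (rule has_vector_derivative_right_approx[OF der \<open>t < b\<close>]) (use \<open>e > 0\<close> in simp)
  have pos: "\<forall>\<^sub>F h in at_right (0::real). h > 0"
    by (simp add: eventually_at_right_less)
  have tri: "norm (w (t + h)) \<le> norm (w t + h *\<^sub>R w') + norm (w (t + h) - w t - h *\<^sub>R w')" for h
    using norm_triangle_ineq[of "w t + h *\<^sub>R w'" "w (t + h) - w t - h *\<^sub>R w'"] by simp
  have linear_part: "\<forall>\<^sub>F h in at_right 0. norm (w t + h *\<^sub>R w') \<le> norm (w t) + h * (c + e/2)"
  proof (cases "w t = 0")
    case True
    show ?thesis
      using pos by eventually_elim (use norm_le[OF True] True \<open>e > 0\<close> in \<open>simp add: mult_left_mono\<close>)
  next
    case False
    let ?L = "Inf (norm_diff_quot (w t) w' ` {0<..})"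
    have "?L \<le> c"
      using rsip_le[OF False] False unfolding rsip_eq_Inf by (simp add: mult.commute)
    have step: "norm (w t + h *\<^sub>R w') \<le> norm (w t) + h * (c + e/2)"
      if "h > 0" "norm_diff_quot (w t) w' h < ?L + e/2" for h
    proof -
      have "norm (w t + h *\<^sub>R w') - norm (w t) < h * (?L + e/2)"
        using that unfolding norm_diff_quot_def by (simp add: divide_less_eq mult.commute)
      also have "\<dots> \<le> h * (c + e/2)"
        using \<open>?L \<le> c\<close> that(1) by simp
      finally show ?thesis by simp
    qed
    have "\<forall>\<^sub>F h in at_right 0. norm_diff_quot (w t) w' h < ?L + e/2"
      by (rule order_tendstoD(2)[OF norm_diff_quot_tendsto_Inf]) (use \<open>e > 0\<close> in simp)
    with pos show ?thesis
      by eventually_elim (rule step)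
  qed
  show ?thesis
  proof (use approx linear_part in eventually_elim)
    case (elim h)
    then show ?case
      using tri[of h] by (simp add: algebra_simps)
  qed
qed

lemma continuous_on_neg_right_neighbourhood:
  fixes h :: "real \<Rightarrow> real"
  assumes "continuous_on {a..b} h" "s \<in> {a..<b}" "h s < 0"
  obtains d where "d > 0" "\<And>\<tau>. \<tau> \<in> {s<..<s + d} \<Longrightarrow> h \<tau> < 0"
proof -
  have "\<forall>\<^sub>F \<tau> in at s within {a..b}. h \<tau> < 0"
    using assms by (intro order_tendstoD(2)[of _ "h s"]) (auto simp: continuous_on_def)
  then obtain d where d: "d > 0" "\<forall>\<tau>\<in>{a..b}. \<tau> \<noteq> s \<and> dist \<tau> s < d \<longrightarrow> h \<tau> < 0"
    unfolding eventually_at by blast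
  show thesis
  proof (rule that[of "min d (b - s)"])
    fix \<tau> assume "\<tau> \<in> {s<..<s + min d (b - s)}"
    then show "h \<tau> < 0"
      using d(2) assms(2) by (force simp: dist_real_def)
  qed (use d(1) assms(2) in simp)
qed

lemma le_on_interval_if_touching_continues:
  fixes \<psi> g :: "real \<Rightarrow> real"
  assumes cont: "continuous_on {a..b} (\<lambda>t. \<psi> t - g t)" and start: "\<psi> a < g a"
    and touch: "\<And>t. t \<in> {a..<b} \<Longrightarrow> (\<forall>\<tau>\<in>{a..t}. \<psi> \<tau> \<le> g \<tau>) \<Longrightarrow> \<psi> t = g t \<Longrightarrow>
                  \<exists>\<delta>>0. \<forall>\<tau>\<in>{t<..<t + \<delta>}. \<psi> \<tau> \<le> g \<tau>"
    and t: "t \<in> {a..b}"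
  shows "\<psi> t \<le> g t"
proof -
  define S where "S = {s\<in>{a..b}. \<forall>\<tau>\<in>{a..s}. \<psi> \<tau> \<le> g \<tau>}"
  define s where "s = Sup S"
  have "a \<in> S"
    using start t by (auto simp: S_def)
  have bdd: "bdd_above S"
    by (rule bdd_aboveI[where M=b]) (simp add: S_def)
  have "a \<le> s"
    unfolding s_def by (rule cSup_upper[OF \<open>a \<in> S\<close> bdd])
  moreover have "s \<le> b"
    unfolding s_def by (rule cSup_least) (use \<open>a \<in> S\<close> in \<open>auto simp: S_def\<close>)
  ultimately have s: "a \<le> s" "s \<le> b" .
  have below: "\<psi> \<tau> \<le> g \<tau>" if \<tau>: "\<tau> \<in> {a..<s}" for \<tau>
  proof -
    obtain x where "x \<in> S" "\<tau> < x"
      using less_cSupD[of S \<tau>] \<tau> \<open>a \<in> S\<close> unfolding s_def by auto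
    then show ?thesis
      using \<tau> by (simp add: S_def)
  qed
  have "\<psi> s \<le> g s"
  proof (cases "a < s")
    case True
    have "closed ({a..b} \<inter> (\<lambda>t. \<psi> t - g t) -` {..0})"
      by (rule continuous_closed_preimage[OF cont]) auto
    moreover have "{a..<s} \<subseteq> {a..b} \<inter> (\<lambda>t. \<psi> t - g t) -` {..0}"
      using below s by auto
    ultimately have "closure {a..<s} \<subseteq> {a..b} \<inter> (\<lambda>t. \<psi> t - g t) -` {..0}"
      by (rule closure_minimal[rotated])
    moreover have "s \<in> closure {a..<s}"
      using True by simp
    ultimately show ?thesis
      by auto
  qed (use start s in auto)
  have "s = b"
  proof (rule ccontr)
    assume "s \<noteq> b"
    then have "s \<in> {a..<b}"
      using s by simp
    have "\<forall>\<tau>\<in>{a..s}. \<psi> \<tau> \<le> g \<tau>"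
      using below \<open>\<psi> s \<le> g s\<close> by (metis atLeastAtMost_iff atLeastLessThan_iff order_le_less)
    obtain \<delta> where \<delta>: "\<delta> > 0" "\<forall>\<tau>\<in>{s<..<s + \<delta>}. \<psi> \<tau> \<le> g \<tau>"
    proof (cases "\<psi> s = g s")
      case True
      then show ?thesis using touch \<open>s \<in> {a..<b}\<close> \<open>\<forall>\<tau>\<in>{a..s}. \<psi> \<tau> \<le> g \<tau>\<close> that by blast
    next
      case False
      then have "\<psi> s - g s < 0"
        using \<open>\<psi> s \<le> g s\<close> by simp
      then obtain d where d: "d > 0" "\<And>\<tau>. \<tau> \<in> {s<..<s + d} \<Longrightarrow> \<psi> \<tau> - g \<tau> < 0"
        using continuous_on_neg_right_neighbourhood[OF cont \<open>s \<in> {a..<b}\<close>] by blast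
      have "\<forall>\<tau>\<in>{s<..<s + d}. \<psi> \<tau> \<le> g \<tau>"
        using d(2) by (simp add: less_imp_le)
      then show ?thesis
        by (rule that[OF d(1)])
    qed
    define s' where "s' = s + min \<delta> (b - s) / 2"
    have s': "s < s'" "s' < s + \<delta>" "s' \<le> b"
      using \<delta>(1) s \<open>s \<noteq> b\<close> unfolding s'_def by (auto simp: min_def field_simps)
    have "\<psi> \<tau> \<le> g \<tau>" if "\<tau> \<in> {a..s'}" for \<tau>
      using \<delta>(2) \<open>\<forall>\<tau>\<in>{a..s}. \<psi> \<tau> \<le> g \<tau>\<close> s' that by (cases "\<tau> \<le> s") auto
    then have "s' \<in> S"
      using s s' by (simp add: S_def)
    then show False
      using cSup_upper[OF _ bdd] \<delta>(1) s \<open>s \<noteq> b\<close> by (fastforce simp: s_def[symmetric] s'_def)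
  qed
  then show ?thesis
    using t below \<open>\<psi> s \<le> g s\<close> by (cases "t < s") auto
qed

lemma Dini_exp_barrier:
  fixes \<psi> :: "real \<Rightarrow> real"
  assumes cont: "continuous_on {a..b} \<psi>" and "\<psi> a \<ge> 0" and "\<eta> > 0"
    and guard: "\<And>\<tau>. \<tau> \<in> {a..b} \<Longrightarrow> (\<psi> a + \<eta>) * exp ((\<mu> + \<eta>) * (\<tau> - a)) < R"
    and dini: "\<And>t e. t \<in> {a..<b} \<Longrightarrow> (\<forall>\<tau>\<in>{a..t}. \<psi> \<tau> < R) \<Longrightarrow> e > 0 \<Longrightarrow>
                 \<forall>\<^sub>F h in at_right 0. \<psi> (t + h) \<le> \<psi> t + h * (\<mu> * \<psi> t + e)"
    and t: "t \<in> {a..b}"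
  shows "\<psi> t \<le> (\<psi> a + \<eta>) * exp ((\<mu> + \<eta>) * (t - a))"
proof -
  define g where "g t = (\<psi> a + \<eta>) * exp ((\<mu> + \<eta>) * (t - a))" for t
  have g_pos: "g t > 0" for t
    unfolding g_def using \<open>\<psi> a \<ge> 0\<close> \<open>\<eta> > 0\<close> by simp
  have g_shift: "g (t + h) = g t * exp ((\<mu> + \<eta>) * h)" for t h
    unfolding g_def by (simp add: algebra_simps flip: exp_add)
  have "\<psi> t \<le> g t"
  proof (rule le_on_interval_if_touching_continues[OF _ _ _ t])
    show "continuous_on {a..b} (\<lambda>t. \<psi> t - g t)"
      unfolding g_def by (intro continuous_intros cont)
    show "\<psi> a < g a"
      unfolding g_def using \<open>\<eta> > 0\<close> by simp
  next
    fix t assume t: "t \<in> {a..<b}" and le: "\<forall>\<tau>\<in>{a..t}. \<psi> \<tau> \<le> g \<tau>" and eq: "\<psi> t = g t"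
    have "\<forall>\<tau>\<in>{a..t}. \<psi> \<tau> < R"
      using le guard t unfolding g_def by (fastforce intro: le_less_trans)
    then have "\<forall>\<^sub>F h in at_right 0. \<psi> (t + h) \<le> \<psi> t + h * (\<mu> * \<psi> t + \<eta> * g t / 2)"
      using dini[OF t] g_pos \<open>\<eta> > 0\<close> by simp
    then obtain d where d: "d > 0" "\<And>h. 0 < h \<Longrightarrow> h < d \<Longrightarrow> \<psi> (t + h) \<le> g t + h * (\<mu> * g t + \<eta> * g t / 2)"
      unfolding eventually_at_right_field eq by auto
    have step: "\<psi> (t + h) \<le> g (t + h)" if "0 < h" "h < d" for h
    proof -
      have "0 < \<eta> * (h * g t)"
        using that(1) \<open>\<eta> > 0\<close> g_pos[of t] by simp
      then have "\<psi> (t + h) \<le> g t * (1 + (\<mu> + \<eta>) * h)"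
        using d(2)[OF that] by (simp add: algebra_simps)
      also have "\<dots> \<le> g t * exp ((\<mu> + \<eta>) * h)"
        using g_pos[of t] by (intro mult_left_mono) auto
      finally show ?thesis
        by (simp add: g_shift)
    qed
    show "\<exists>\<delta>>0. \<forall>\<tau>\<in>{t<..<t + \<delta>}. \<psi> \<tau> \<le> g \<tau>"
    proof (intro exI[of _ d] conjI ballI)
      fix \<tau> assume "\<tau> \<in> {t<..<t + d}"
      then show "\<psi> \<tau> \<le> g \<tau>"
        using step[of "\<tau> - t"] by simp
    qed (rule d(1))
  qed
  then show ?thesis
    unfolding g_def .
qed

text \<open>The Dini bound is only required while \<open>\<psi>\<close> stays below \<open>R\<close>, a threshold that the
  comparison function does not reach.\<close>

lemma Dini_Gronwall:
  fixes \<psi> :: "real \<Rightarrow> real"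
  assumes cont: "continuous_on {a..b} \<psi>" and "\<psi> a \<ge> 0"
    and guard: "\<psi> a * max 1 (exp (\<mu> * (b - a))) < R"
    and dini: "\<And>t e. t \<in> {a..<b} \<Longrightarrow> (\<forall>\<tau>\<in>{a..t}. \<psi> \<tau> < R) \<Longrightarrow> e > 0 \<Longrightarrow>
                 \<forall>\<^sub>F h in at_right 0. \<psi> (t + h) \<le> \<psi> t + h * (\<mu> * \<psi> t + e)"
    and t: "t \<in> {a..b}"
  shows "\<psi> t \<le> exp (\<mu> * (t - a)) * \<psi> a"
proof -
  define E where "E = max 1 (exp (\<mu> * (b - a)))"
  have E: "exp (\<mu> * (\<tau> - a)) \<le> E" if "\<tau> \<in> {a..b}" for \<tau>
  proof (cases "\<mu> \<ge> 0")
    case True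
    then have "\<mu> * (\<tau> - a) \<le> \<mu> * (b - a)"
      using that by (intro mult_left_mono) auto
    then show ?thesis
      unfolding E_def by (simp add: le_max_iff_disj)
  next
    case False
    then have "\<mu> * (\<tau> - a) \<le> 0"
      using that by (simp add: mult_nonpos_nonneg)
    then show ?thesis
      unfolding E_def by (simp add: le_max_iff_disj)
  qed
  have "((\<lambda>\<eta>. (\<psi> a + \<eta>) * E * exp (\<eta> * (b - a))) \<longlongrightarrow> (\<psi> a + 0) * E * exp (0 * (b - a))) (at_right 0)"
    by (intro tendsto_intros)
  then have "\<forall>\<^sub>F \<eta> in at_right 0. (\<psi> a + \<eta>) * E * exp (\<eta> * (b - a)) < R"
    using guard unfolding E_def by (intro order_tendstoD(2)) auto
  then have "\<forall>\<^sub>F \<eta> in at_right 0. \<psi> t \<le> (\<psi> a + \<eta>) * exp ((\<mu> + \<eta>) * (t - a))"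
    using eventually_at_right_less[of 0]
  proof eventually_elim
    case (elim \<eta>)
    have "(\<psi> a + \<eta>) * exp ((\<mu> + \<eta>) * (\<tau> - a)) < R" if "\<tau> \<in> {a..b}" for \<tau>
    proof -
      have "exp ((\<mu> + \<eta>) * (\<tau> - a)) = exp (\<mu> * (\<tau> - a)) * exp (\<eta> * (\<tau> - a))"
        by (simp add: algebra_simps flip: exp_add)
      also have "\<dots> \<le> E * exp (\<eta> * (b - a))"
        using E[OF that] that elim by (intro mult_mono) (auto simp: E_def)
      finally show ?thesis
        using elim \<open>\<psi> a \<ge> 0\<close> by (smt (verit) mult.assoc mult_left_mono)
    qed
    then show ?case
      using Dini_exp_barrier[OF cont \<open>\<psi> a \<ge> 0\<close> _ _ dini t] elim by blast
  qed
  moreover have "((\<lambda>\<eta>. (\<psi> a + \<eta>) * exp ((\<mu> + \<eta>) * (t - a))) \<longlongrightarrow> (\<psi> a + 0) * exp ((\<mu> + 0) * (t - a)))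
      (at_right 0)"
    by (intro tendsto_intros)
  ultimately have "\<psi> t \<le> (\<psi> a + 0) * exp ((\<mu> + 0) * (t - a))"
    using tendsto_le[OF trivial_limit_at_right_real _ tendsto_const] by blast
  then show ?thesis
    by (simp add: mult.commute)
qed

lemma continuous_on_uniform_near_compact:
  fixes g :: "'a::metric_space \<Rightarrow> 'b::metric_space"
  assumes K: "compact K" "K \<subseteq> D" and g: "continuous_on D g" and "e > 0"
  obtains d where "d > 0" "\<And>k p. k \<in> K \<Longrightarrow> p \<in> D \<Longrightarrow> dist p k < d \<Longrightarrow> dist (g p) (g k) < e"
proof -
  have "\<exists>\<delta>>0. \<forall>p\<in>D. dist p k < \<delta> \<longrightarrow> dist (g p) (g k) < e/2" if "k \<in> K" for k
    using g K(2) that \<open>e > 0\<close> unfolding continuous_on_iff by (meson half_gt_zero subsetD)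
  then obtain \<delta> where \<delta>: "\<And>k. k \<in> K \<Longrightarrow> \<delta> k > 0"
    "\<And>k p. k \<in> K \<Longrightarrow> p \<in> D \<Longrightarrow> dist p k < \<delta> k \<Longrightarrow> dist (g p) (g k) < e/2"
    by metis
  obtain \<rho> where \<rho>: "\<rho> > 0" "\<And>x. x \<in> K \<Longrightarrow> \<exists>G\<in>(\<lambda>k. ball k (\<delta> k)) ` K. ball x \<rho> \<subseteq> G"
    by (rule Heine_Borel_lemma[OF K(1), of "(\<lambda>k. ball k (\<delta> k)) ` K"]) (use \<delta>(1) in force)+
  show thesis
  proof (rule that[OF \<rho>(1)])
    fix x p assume "x \<in> K" "p \<in> D" "dist p x < \<rho>"
    then obtain k where "k \<in> K" "ball x \<rho> \<subseteq> ball k (\<delta> k)"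
      using \<rho>(2) by blast
    moreover have "p \<in> ball x \<rho>" "x \<in> ball x \<rho>"
      using \<open>dist p x < \<rho>\<close> \<rho>(1) by (simp_all add: dist_commute)
    ultimately have "p \<in> ball k (\<delta> k)" "x \<in> ball k (\<delta> k)"
      by blast+
    then have "dist p k < \<delta> k" "dist x k < \<delta> k"
      by (simp_all add: dist_commute)
    then show "dist (g p) (g x) < e"
      using \<delta>(2) \<open>k \<in> K\<close> \<open>p \<in> D\<close> \<open>x \<in> K\<close> K(2) by (blast intro: dist_triangle_half_l)
  qed
qed

lemma onorm_blinfun_snd_le:
  fixes L :: "('a::real_normed_vector \<times> 'b::real_normed_vector) \<Rightarrow>\<^sub>L 'c::real_normed_vector"
  shows "onorm (\<lambda>v. L (0, v)) \<le> norm L"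
proof (rule onorm_bound)
  fix v :: 'b
  show "norm (L (0, v)) \<le> norm L * norm v"
    using norm_blinfun[of L "(0, v)"] by (simp add: norm_Pair)
qed simp

lemma sum_power_fact_le_exp:
  fixes x :: real
  assumes "0 \<le> x"
  shows "(\<Sum>k<n. x ^ k / fact k) \<le> exp x"
proof -
  have "(\<lambda>k. x ^ k / fact k) sums exp x"
    using exp_converges[of x] by (simp add: divide_inverse mult.commute)
  then show ?thesis
    using sum_le_suminf[of "\<lambda>k. x ^ k / fact k" "{..<n}"] assms by (auto simp: sums_iff)
qed

lemma norm_telescope_le_exp:
  fixes z :: "nat \<Rightarrow> 'a::real_normed_vector"
  assumes "\<And>k. k < n \<Longrightarrow> norm (z (Suc k) - z k) \<le> \<delta> * x ^ k / fact k" and "\<delta> \<ge> 0" "x \<ge> 0"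
  shows "norm (z n - z 0) \<le> \<delta> * exp x"
proof -
  have "norm (z n - z 0) \<le> (\<Sum>k<n. norm (z (Suc k) - z k))"
    using norm_sum[of "\<lambda>k. z (Suc k) - z k" "{..<n}"] by (simp add: sum_lessThan_telescope)
  also have "\<dots> \<le> (\<Sum>k<n. \<delta> * (x ^ k / fact k))"
    using assms(1) by (intro sum_mono) simp
  also have "\<dots> \<le> \<delta> * exp x"
    unfolding sum_distrib_left[symmetric] using assms(2,3)
    by (intro mult_left_mono sum_power_fact_le_exp)
  finally show ?thesis .
qed

lemma has_integral_monomial:
  fixes t c :: real
  assumes "0 \<le> t"
  shows "((\<lambda>\<tau>. c * \<tau> ^ n) has_integral (c * t ^ Suc n / Suc n)) {0..t}"
proof -
  have "((\<lambda>\<tau>. c * \<tau> ^ n) has_integral ((\<lambda>\<tau>. c * \<tau> ^ Suc n / Suc n) t - (\<lambda>\<tau>. c * \<tau> ^ Suc n / Suc n) 0)) {0..t}"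
  proof (rule fundamental_theorem_of_calculus[OF assms])
    fix x :: real
    have "((\<lambda>\<tau>. c * \<tau> ^ Suc n / Suc n) has_real_derivative c * (real (Suc n) * x ^ n) / Suc n) (at x within {0..t})"
      by (intro derivative_eq_intros) auto
    then show "((\<lambda>\<tau>. c * \<tau> ^ Suc n / Suc n) has_vector_derivative c * x ^ n) (at x within {0..t})"
      by (simp add: has_real_derivative_iff_has_vector_derivative[symmetric] del: of_nat_Suc)
  qed
  then show ?thesis by simp
qed

lemma norm_diff_le_of_local_le:
  fixes Z :: "real \<Rightarrow> 'a::real_normed_vector"
  assumes "\<alpha> \<le> \<beta>" "\<eta> > 0"
    and local: "\<And>s s'. \<alpha> \<le> s \<Longrightarrow> s \<le> s' \<Longrightarrow> s' \<le> \<beta> \<Longrightarrow> s' - s < \<eta> \<Longrightarrow> norm (Z s' - Z s) \<le> K * (s' - s)"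
  shows "norm (Z \<beta> - Z \<alpha>) \<le> K * (\<beta> - \<alpha>)"
proof -
  define N where "N = nat \<lceil>(\<beta> - \<alpha>) / \<eta>\<rceil> + 1"
  define h where "h = (\<beta> - \<alpha>) / N"
  define s where "s i = \<alpha> + real i * h" for i :: nat
  have "N > 0"
    unfolding N_def by simp
  have "(\<beta> - \<alpha>) / \<eta> < N"
    unfolding N_def by linarith
  then have h: "0 \<le> h" "h < \<eta>"
    using \<open>\<alpha> \<le> \<beta>\<close> \<open>\<eta> > 0\<close> \<open>N > 0\<close> by (auto simp: h_def field_simps)
  have s_N: "s N = \<beta>"
    unfolding s_def h_def using \<open>N > 0\<close> by simp
  have s_range: "\<alpha> \<le> s i" "s i \<le> \<beta>" if "i \<le> N" for i
    using mult_right_mono[of "real i" "real N" h] that h s_N by (auto simp: s_def)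
  have "Z \<beta> - Z \<alpha> = (\<Sum>i<N. Z (s (Suc i)) - Z (s i))"
    using s_N sum_lessThan_telescope[of "\<lambda>i. Z (s i)" N] by (simp add: s_def)
  then have "norm (Z \<beta> - Z \<alpha>) \<le> (\<Sum>i<N. norm (Z (s (Suc i)) - Z (s i)))"
    by (simp add: norm_sum)
  also have "\<dots> \<le> (\<Sum>i<N. K * h)"
  proof (rule sum_mono)
    fix i assume "i \<in> {..<N}"
    moreover have "s (Suc i) - s i = h"
      by (simp add: s_def algebra_simps)
    ultimately show "norm (Z (s (Suc i)) - Z (s i)) \<le> K * h"
      using local[of "s i" "s (Suc i)"] s_range[of i] s_range[of "Suc i"] h by simp
  qed
  also have "\<dots> = K * (\<beta> - \<alpha>)"
    using \<open>N > 0\<close> by (simp add: h_def)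
  finally show ?thesis .
qed

lemma Lipschitz_limit_at_left:
  fixes Z :: "real \<Rightarrow> 'a::banach"
  assumes "\<sigma> > 0" "K \<ge> 0"
    and lip: "\<And>s s'. 0 \<le> s \<Longrightarrow> s \<le> s' \<Longrightarrow> s' < \<sigma> \<Longrightarrow> norm (Z s' - Z s) \<le> K * (s' - s)"
  obtains l where "(Z \<longlongrightarrow> l) (at \<sigma> within {0..<\<sigma>})"
    "\<And>s. s \<in> {0..<\<sigma>} \<Longrightarrow> norm (Z s - l) \<le> K * (\<sigma> - s)"
proof -
  have "K-lipschitz_on {0..<\<sigma>} Z"
  proof (rule lipschitz_onI)
    fix s s' assume "s \<in> {0..<\<sigma>}" "s' \<in> {0..<\<sigma>}"
    then show "dist (Z s) (Z s') \<le> K * dist s s'"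
      using lip[of s s'] lip[of s' s]
      by (cases "s \<le> s'") (auto simp: dist_norm norm_minus_commute abs_if)
  qed fact
  moreover have "\<sigma> \<in> closure {0..<\<sigma>}"
    using \<open>\<sigma> > 0\<close> by simp
  ultimately obtain l where l: "(Z \<longlongrightarrow> l) (at \<sigma> within {0..<\<sigma>})"
    using uniformly_continuous_on_extension_at_closure[OF lipschitz_on_uniformly_continuous] by metis
  have nontrivial: "at \<sigma> within {0..<\<sigma>} \<noteq> bot"
    using \<open>\<sigma> > 0\<close> by (simp add: trivial_limit_within islimpt_Ico)
  show thesis
  proof (rule that[OF l])
    fix s assume s: "s \<in> {0..<\<sigma>}"
    have "((\<lambda>s'. norm (Z s' - Z s)) \<longlongrightarrow> norm (l - Z s)) (at \<sigma> within {0..<\<sigma>})"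
      by (intro tendsto_intros l)
    moreover have "\<forall>\<^sub>F s' in at \<sigma> within {0..<\<sigma>}. norm (Z s' - Z s) \<le> K * (\<sigma> - s)"
    proof -
      have "\<forall>\<^sub>F s' in at \<sigma> within {0..<\<sigma>}. s < s' \<and> s' \<in> {0..<\<sigma>}"
        using s by (auto simp: eventually_at_filter eventually_nhds intro!: exI[of _ "{s<..}"])
      then show ?thesis
      proof eventually_elim
        case (elim s')
        then have "norm (Z s' - Z s) \<le> K * (s' - s)"
          using lip[of s s'] s by auto
        also have "\<dots> \<le> K * (\<sigma> - s)"
          using elim \<open>K \<ge> 0\<close> by (intro mult_left_mono) auto
        finally show ?case .
      qed
    qed
    ultimately have "norm (l - Z s) \<le> K * (\<sigma> - s)"
      by (rule tendsto_upperbound[OF _ _ nontrivial])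
    then show "norm (Z s - l) \<le> K * (\<sigma> - s)"
      by (simp add: norm_minus_commute)
  qed
qed

section \<open>Solutions of \<open>C\<^sup>1\<close> equations\<close>

locale c1_ode =
  fixes f :: "real \<times> 'v::banach \<Rightarrow> 'v" and f' :: "real \<times> 'v \<Rightarrow> (real \<times> 'v) \<Rightarrow>\<^sub>L 'v"
  assumes f_deriv: "\<And>p. p \<in> {0..} \<times> UNIV \<Longrightarrow>
             (f has_derivative blinfun_apply (f' p)) (at p within {0..} \<times> UNIV)"
    and f'_cont: "continuous_on ({0..} \<times> UNIV) f'"
begin

definition solution_on :: "real \<Rightarrow> (real \<Rightarrow> 'v) \<Rightarrow> bool" where
  "solution_on T x \<longleftrightarrow> (\<forall>t\<in>{0..T}. (x has_vector_derivative f (t, x t)) (at t within {0..T}))"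

lemma continuous_on_f: "continuous_on ({0..} \<times> UNIV) f"
  unfolding continuous_on_eq_continuous_within
  using f_deriv has_derivative_continuous by blast

lemma continuous_on_f_along:
  assumes "continuous_on {0..T} z"
  shows "continuous_on {0..T} (\<lambda>\<tau>. f (\<tau>, z \<tau>))"
  by (rule continuous_on_compose2[OF continuous_on_f]) (auto intro!: continuous_intros assms)

lemma solution_on_continuous: "solution_on T x \<Longrightarrow> continuous_on {0..T} x"
  unfolding solution_on_def continuous_on_eq_continuous_within
  using has_vector_derivative_continuous by blast

lemma f_has_derivative_snd:
  assumes "t \<ge> 0"
  shows "((\<lambda>y. f (t, y)) has_derivative (\<lambda>v. f' (t, y) (0, v))) (at y within S)"
proof -
  have "((\<lambda>y. (t, y)) has_derivative (\<lambda>v. (0, v))) (at y within S)"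
    by (intro derivative_eq_intros) auto
  moreover have "(f has_derivative f' (t, y)) (at (t, y) within (\<lambda>y. (t, y)) ` S)"
    by (rule has_derivative_subset[OF f_deriv]) (use assms in auto)
  ultimately show ?thesis
    using diff_chain_within by (fastforce simp: o_def)
qed

lemma norm_f_diff_le:
  assumes "t \<ge> 0" and B: "\<And>z. z \<in> ball c \<rho> \<Longrightarrow> norm (f' (t, z)) \<le> B"
    and "u \<in> ball c \<rho>" "v \<in> ball c \<rho>"
  shows "norm (f (t, u) - f (t, v)) \<le> B * norm (u - v)"
proof (rule differentiable_bound[OF convex_ball _ _ assms(3,4)])
  show "((\<lambda>y. f (t, y)) has_derivative (\<lambda>v. f' (t, y) (0, v))) (at y within ball c \<rho>)" for y
    by (rule f_has_derivative_snd[OF \<open>t \<ge> 0\<close>])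
  show "onorm (\<lambda>v. f' (t, y) (0, v)) \<le> B" if "y \<in> ball c \<rho>" for y
    using onorm_blinfun_snd_le[of "f' (t, y)"] B[OF that] by linarith
qed

lemma norm_f_linearization_le:
  assumes "t \<ge> 0" and e: "\<And>s. s \<in> {0..1} \<Longrightarrow> norm (f' (t, x + s *\<^sub>R (y - x)) - f' (t, x)) \<le> e"
  shows "norm (f (t, y) - f (t, x) - f' (t, x) (0, y - x)) \<le> norm (y - x) * e"
proof -
  define S where "S = (\<lambda>s. x + s *\<^sub>R (y - x)) ` {0..1}"
  have "x \<in> S"
    unfolding S_def by (rule image_eqI[where x=0]) auto
  show ?thesis
  proof (rule differentiable_bound_linearization[where S=S and f'="\<lambda>z v. f' (t, z) (0, v)"
        and f="\<lambda>z. f (t, z)", OF _ _ _ \<open>x \<in> S\<close>])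
    show "x + s *\<^sub>R (y - x) \<in> S" if "s \<in> {0..1}" for s
      unfolding S_def using that by blast
    show "((\<lambda>z. f (t, z)) has_derivative (\<lambda>v. f' (t, z) (0, v))) (at z within S)" for z
      by (rule f_has_derivative_snd[OF \<open>t \<ge> 0\<close>])
    show "onorm ((\<lambda>v. f' (t, z) (0, v)) - (\<lambda>v. f' (t, x) (0, v))) \<le> e" if "z \<in> S" for z
    proof -
      obtain s where s: "s \<in> {0..1}" "z = x + s *\<^sub>R (y - x)"
        using \<open>z \<in> S\<close> unfolding S_def by blast
      have "(\<lambda>v. f' (t, z) (0, v)) - (\<lambda>v. f' (t, x) (0, v)) = (\<lambda>v. (f' (t, z) - f' (t, x)) (0, v))"
        by (auto simp: fun_eq_iff blinfun.diff_left)
      then show ?thesis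
        using onorm_blinfun_snd_le[of "f' (t, z) - f' (t, x)"] e[OF s(1)] s(2) by simp
    qed
  qed
qed

lemma f'_bounded_near_curve:
  assumes "continuous_on {0..T} Y"
  obtains \<rho> B where "\<rho> > 0" "B \<ge> 0"
    "\<And>t z. t \<in> {0..T} \<Longrightarrow> norm (z - Y t) < \<rho> \<Longrightarrow> norm (f' (t, z)) \<le> B"
proof -
  define K where "K = (\<lambda>t. (t, Y t)) ` {0..T}"
  have K: "compact K" "K \<subseteq> {0..} \<times> UNIV"
    unfolding K_def by (auto intro!: compact_continuous_image continuous_intros assms)
  obtain d where d: "d > 0"
    "\<And>k p. k \<in> K \<Longrightarrow> p \<in> {0..} \<times> UNIV \<Longrightarrow> dist p k < d \<Longrightarrow> dist (f' p) (f' k) < 1"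
    using continuous_on_uniform_near_compact[OF K f'_cont, of 1] by auto
  have "bounded (f' ` K)"
    by (rule compact_imp_bounded[OF compact_continuous_image[OF continuous_on_subset[OF f'_cont K(2)] K(1)]])
  then obtain M where M: "\<And>k. k \<in> K \<Longrightarrow> norm (f' k) \<le> M"
    unfolding bounded_iff by blast
  show thesis
  proof (rule that[OF d(1), of "max 0 M + 1"])
    fix t z assume "t \<in> {0..T}" "norm (z - Y t) < d"
    then have "dist (f' (t, z)) (f' (t, Y t)) < 1" "norm (f' (t, Y t)) \<le> M"
      using d(2)[of "(t, Y t)" "(t, z)"] M[of "(t, Y t)"] by (auto simp: K_def dist_Pair_Pair dist_norm)
    then show "norm (f' (t, z)) \<le> max 0 M + 1"
      using norm_triangle_ineq2[of "f' (t, z)" "f' (t, Y t)"] by (simp add: dist_norm)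
  qed simp
qed

lemma solution_diff_le_exp:
  assumes x: "solution_on T x" and y: "solution_on T y" and "T \<ge> 0" "B \<ge> 0"
    and B: "\<And>t z. t \<in> {0..T} \<Longrightarrow> norm (z - x t) < \<rho> \<Longrightarrow> norm (f' (t, z)) \<le> B"
    and init: "norm (y 0 - x 0) * exp (B * T) < \<rho>"
    and t: "t \<in> {0..T}"
  shows "norm (y t - x t) \<le> exp (B * t) * norm (y 0 - x 0)"
proof -
  define \<psi> where "\<psi> t = norm (y t - x t)" for t
  have "\<psi> t \<le> exp (B * (t - 0)) * \<psi> 0"
  proof (rule Dini_Gronwall[where R=\<rho>, OF _ _ _ _ t])
    show "continuous_on {0..T} \<psi>"
      unfolding \<psi>_def by (intro continuous_intros solution_on_continuous x y)
    show "\<psi> 0 * max 1 (exp (B * (T - 0))) < \<rho>"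
      using init \<open>B \<ge> 0\<close> \<open>T \<ge> 0\<close> unfolding \<psi>_def by (simp add: max_def)
  next
    fix t e :: real
    assume t: "t \<in> {0..<T}" and below: "\<forall>\<tau>\<in>{0..t}. \<psi> \<tau> < \<rho>" and "e > 0"
    have "((\<lambda>s. y s - x s) has_vector_derivative (f (t, y t) - f (t, x t))) (at t within {0..T})"
      using x y t unfolding solution_on_def by (intro has_vector_derivative_diff) auto
    then have der: "((\<lambda>s. y s - x s) has_vector_derivative (f (t, y t) - f (t, x t))) (at t within {t..T})"
      by (rule has_vector_derivative_within_subset) (use t in auto)
    have "norm (f (t, y t) - f (t, x t)) \<le> B * \<psi> t"
      unfolding \<psi>_def
    proof (rule norm_f_diff_le[where c="x t" and \<rho>=\<rho>])
      show "norm (f' (t, z)) \<le> B" if "z \<in> ball (x t) \<rho>" for z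
        using B[of t z] that t by (simp add: dist_norm norm_minus_commute)
      have "norm (y t - x t) < \<rho>"
        using below t unfolding \<psi>_def by simp
      then show "y t \<in> ball (x t) \<rho>" "x t \<in> ball (x t) \<rho>"
        by (auto simp: dist_norm norm_minus_commute intro: le_less_trans[OF norm_ge_zero])
    qed (use t in simp)
    then have "\<forall>\<^sub>F h in at_right 0. \<psi> (t + h) \<le> \<psi> t + h * (B * \<psi> t + e)"
      unfolding \<psi>_def using rsip_le_norm_mult[of "y t - x t" "f (t, y t) - f (t, x t)"] t
      by (intro norm_right_Dini_le[OF der _ _ _ \<open>e > 0\<close>])
        (auto intro: order.trans[OF _ mult_left_mono] simp: mult.commute)
    then show "\<forall>\<^sub>F h in at_right 0. \<psi> (t + h) \<le> \<psi> t + h * (B * \<psi> t + e)" .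
  qed (simp add: \<psi>_def)
  then show ?thesis
    unfolding \<psi>_def by simp
qed

lemma solution_unique:
  assumes x: "solution_on T x" and y: "solution_on T y" and "y 0 = x 0" and t: "t \<in> {0..T}"
  shows "y t = x t"
proof -
  obtain \<rho> B where "\<rho> > 0" "B \<ge> 0"
    and "\<And>t z. t \<in> {0..T} \<Longrightarrow> norm (z - x t) < \<rho> \<Longrightarrow> norm (f' (t, z)) \<le> B"
    using f'_bounded_near_curve[OF solution_on_continuous[OF x]] by blast
  then have "norm (y t - x t) \<le> exp (B * t) * norm (y 0 - x 0)"
    using t \<open>y 0 = x 0\<close> by (intro solution_diff_le_exp[OF x y]) auto
  then show ?thesis
    using \<open>y 0 = x 0\<close> by simp
qed

definition picard :: "'v \<Rightarrow> (real \<Rightarrow> 'v) \<Rightarrow> real \<Rightarrow> 'v" where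
  "picard a z t = a + integral {0..t} (\<lambda>\<tau>. f (\<tau>, z \<tau>))"

lemma continuous_on_picard:
  assumes "continuous_on {0..T} z"
  shows "continuous_on {0..T} (picard a z)"
  unfolding picard_def
  by (intro continuous_intros indefinite_integral_continuous_1 integrable_continuous_real
      continuous_on_f_along assms)

lemma norm_picard_diff_le:
  assumes "continuous_on {0..T} z1" "continuous_on {0..T} z2" and t: "t \<in> {0..T}"
    and "(g has_integral I) {0..t}"
    and "\<And>\<tau>. \<tau> \<in> {0..t} \<Longrightarrow> norm (f (\<tau>, z1 \<tau>) - f (\<tau>, z2 \<tau>)) \<le> g \<tau>"
  shows "norm (picard a z1 t - picard a z2 t) \<le> I"
proof -
  have int: "(\<lambda>\<tau>. f (\<tau>, z \<tau>)) integrable_on {0..t}" if "continuous_on {0..T} z" for z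
    using continuous_on_subset[OF continuous_on_f_along[OF that]] t
    by (intro integrable_continuous_real) auto
  have "picard a z1 t - picard a z2 t = integral {0..t} (\<lambda>\<tau>. f (\<tau>, z1 \<tau>) - f (\<tau>, z2 \<tau>))"
    unfolding picard_def using integral_diff[OF int int] assms(1,2) by simp
  also have "norm \<dots> \<le> integral {0..t} g"
    using assms int by (intro integral_norm_bound_integral integrable_diff) auto
  also have "\<dots> = I"
    using assms(4) by (rule integral_unique)
  finally show ?thesis .
qed

lemma solution_eq_picard:
  assumes x: "solution_on T x" and t: "t \<in> {0..T}"
  shows "x t = picard (x 0) x t"
proof -
  have "((\<lambda>\<tau>. f (\<tau>, x \<tau>)) has_integral (x t - x 0)) {0..t}"
  proof (rule fundamental_theorem_of_calculus)
    fix s assume "s \<in> {0..t}"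
    then have "(x has_vector_derivative f (s, x s)) (at s within {0..T})"
      using x t unfolding solution_on_def by auto
    then show "(x has_vector_derivative f (s, x s)) (at s within {0..t})"
      by (rule has_vector_derivative_within_subset) (use t in auto)
  qed (use t in simp)
  then show ?thesis
    unfolding picard_def by (simp add: integral_unique)
qed

lemma solution_on_if_picard_fixpoint:
  assumes y: "continuous_on {0..T} y" and fixpoint: "\<And>t. t \<in> {0..T} \<Longrightarrow> y t = picard a y t"
    and "T \<ge> 0"
  shows "solution_on T y" "y 0 = a"
proof -
  show "y 0 = a"
    using fixpoint[of 0] \<open>T \<ge> 0\<close> by (simp add: picard_def)
  show "solution_on T y"
    unfolding solution_on_def
  proof
    fix t assume t: "t \<in> {0..T}"
    have "((\<lambda>u. integral {0..u} (\<lambda>\<tau>. f (\<tau>, y \<tau>))) has_vector_derivative f (t, y t)) (at t within {0..T})"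
      by (rule integral_has_vector_derivative[OF continuous_on_f_along[OF y] t])
    then have "(picard a y has_vector_derivative f (t, y t)) (at t within {0..T})"
      unfolding picard_def by (intro derivative_eq_intros) auto
    then show "(y has_vector_derivative f (t, y t)) (at t within {0..T})"
      by (rule has_vector_derivative_transform[OF t fixpoint, rotated])
  qed
qed

text \<open>The hypothesis on the initial gap keeps all Picard iterates in the tube around \<open>x\<close>
  where \<open>f\<close> is \<open>B\<close>-Lipschitz.\<close>

lemma picard_iterates_increment_le:
  assumes x: "solution_on T x" and "B \<ge> 0"
    and B: "\<And>t z. t \<in> {0..T} \<Longrightarrow> norm (z - x t) < \<rho> \<Longrightarrow> norm (f' (t, z)) \<le> B"
    and init: "norm (a - x 0) * exp (B * T) < \<rho>"
  shows "\<forall>t\<in>{0..T}. norm ((picard a ^^ Suc n) x t - (picard a ^^ n) x t) \<le> norm (a - x 0) * (B * t) ^ n / fact n"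
proof (induction n rule: less_induct)
  case (less n)
  define z where "z n = (picard a ^^ n) x" for n
  define \<delta> where "\<delta> = norm (a - x 0)"
  have z_Suc: "z (Suc n) = picard a (z n)" for n
    unfolding z_def by simp
  have z_cont: "continuous_on {0..T} (z n)" for n
    by (induction n) (simp_all add: z_def continuous_on_picard solution_on_continuous[OF x])
  have tube: "norm (z m t - x t) < \<rho>" if m: "m \<le> n" and t: "t \<in> {0..T}" for m t
  proof -
    have "norm (z m t - z 0 t) \<le> \<delta> * exp (B * t)"
    proof (rule norm_telescope_le_exp[of m "\<lambda>k. z k t"])
      show "norm (z (Suc k) t - z k t) \<le> \<delta> * (B * t) ^ k / fact k" if "k < m" for k
        using less[of k] m t that unfolding z_def \<delta>_def by auto
    qed (use t \<open>B \<ge> 0\<close> in \<open>auto simp: \<delta>_def\<close>)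
    also have "\<dots> \<le> \<delta> * exp (B * T)"
      using t \<open>B \<ge> 0\<close> by (simp add: \<delta>_def mult_left_mono)
    finally show ?thesis
      using init by (simp add: z_def \<delta>_def)
  qed
  show ?case
  proof (cases n)
    case 0
    show ?thesis
    proof
      fix t assume "t \<in> {0..T}"
      then have "x t - x 0 = integral {0..t} (\<lambda>\<tau>. f (\<tau>, x \<tau>))"
        using solution_eq_picard[OF x, of t] unfolding picard_def by simp
      then show "norm ((picard a ^^ Suc n) x t - (picard a ^^ n) x t) \<le> norm (a - x 0) * (B * t) ^ n / fact n"
        by (simp add: 0 picard_def flip: \<open>x t - x 0 = _\<close>)
    qed
  next
    case (Suc m)
    show ?thesis
    proof
      fix t assume t: "t \<in> {0..T}"
      define c where "c = B * \<delta> * B ^ m / fact m"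
      have "z (Suc n) t - z n t = picard a (z (Suc m)) t - picard a (z m) t"
        by (simp add: Suc z_Suc)
      also have "norm \<dots> \<le> c * t ^ Suc m / Suc m"
      proof (rule norm_picard_diff_le[OF z_cont z_cont t has_integral_monomial])
        fix \<tau> assume \<tau>: "\<tau> \<in> {0..t}"
        then have "\<tau> \<in> {0..T}" using t by simp
        then have "norm (f (\<tau>, z (Suc m) \<tau>) - f (\<tau>, z m \<tau>)) \<le> B * norm (z (Suc m) \<tau> - z m \<tau>)"
          using B tube[of _ \<tau>] Suc
          by (intro norm_f_diff_le[where c="x \<tau>" and \<rho>=\<rho>]) (auto simp: dist_norm norm_minus_commute)
        also have "\<dots> \<le> B * (\<delta> * (B * \<tau>) ^ m / fact m)"
          using less[of m] Suc \<open>\<tau> \<in> {0..T}\<close> \<open>B \<ge> 0\<close> unfolding z_def \<delta>_def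
          by (intro mult_left_mono) auto
        finally show "norm (f (\<tau>, z (Suc m) \<tau>) - f (\<tau>, z m \<tau>)) \<le> c * \<tau> ^ m"
          by (simp add: c_def power_mult_distrib)
      qed (use t in simp)
      also have "\<dots> = \<delta> * (B * t) ^ n / fact n"
        unfolding c_def Suc by (simp add: power_mult_distrib field_simps del: of_nat_Suc)
      finally show "norm ((picard a ^^ Suc n) x t - (picard a ^^ n) x t) \<le> norm (a - x 0) * (B * t) ^ n / fact n"
        by (simp add: z_def \<delta>_def)
    qed
  qed
qed

lemma tendsto_picard_uniform_limit:
  assumes lim: "uniform_limit {0..T} z y sequentially"
    and z: "\<And>n. continuous_on {0..T} (z n)" and y: "continuous_on {0..T} y" and "B \<ge> 0"
    and lip: "\<And>n \<tau>. \<tau> \<in> {0..T} \<Longrightarrow> norm (f (\<tau>, z n \<tau>) - f (\<tau>, y \<tau>)) \<le> B * norm (z n \<tau> - y \<tau>)"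
    and t: "t \<in> {0..T}"
  shows "(\<lambda>n. picard a (z n) t) \<longlonglongrightarrow> picard a y t"
proof (rule tendstoI)
  fix r :: real assume "r > 0"
  define e where "e = r / (B * T + 1)"
  have "B * T \<ge> 0"
    using \<open>B \<ge> 0\<close> t by simp
  then have "e > 0" "T * (B * e) < r"
    using \<open>r > 0\<close> by (simp_all add: e_def field_simps)
  have "\<forall>\<^sub>F n in sequentially. \<forall>\<tau>\<in>{0..T}. dist (z n \<tau>) (y \<tau>) < e"
    using lim \<open>e > 0\<close> by (rule uniform_limitD)
  then show "\<forall>\<^sub>F n in sequentially. dist (picard a (z n) t) (picard a y t) < r"
  proof eventually_elim
    case (elim n)
    have "((\<lambda>_. B * e) has_integral t *\<^sub>R (B * e)) {0..t}"
      using has_integral_const_real[of "B * e" 0 t] t by simp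
    then have "norm (picard a (z n) t - picard a y t) \<le> t *\<^sub>R (B * e)"
    proof (rule norm_picard_diff_le[OF z y t])
      fix \<tau> assume "\<tau> \<in> {0..t}"
      then have "\<tau> \<in> {0..T}"
        using t by simp
      then show "norm (f (\<tau>, z n \<tau>) - f (\<tau>, y \<tau>)) \<le> B * e"
        using lip[of \<tau> n] elim \<open>B \<ge> 0\<close> by (smt (verit) dist_norm mult_left_mono)
    qed
    also have "\<dots> \<le> T * (B * e)"
      using t \<open>B \<ge> 0\<close> \<open>e > 0\<close> by (simp add: mult_right_mono)
    finally show ?case
      using \<open>T * (B * e) < r\<close> by (simp add: dist_norm)
  qed
qed

lemma solution_exists_near:
  assumes x: "solution_on T x" and "T \<ge> 0" "B \<ge> 0"
    and B: "\<And>t z. t \<in> {0..T} \<Longrightarrow> norm (z - x t) < \<rho> \<Longrightarrow> norm (f' (t, z)) \<le> B"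
    and init: "norm (a - x 0) * exp (B * T) < \<rho>"
  obtains y where "solution_on T y" "y 0 = a"
proof -
  define z where "z n = (picard a ^^ n) x" for n
  define \<delta> where "\<delta> = norm (a - x 0)"
  have z_cont: "continuous_on {0..T} (z n)" for n
    by (induction n) (simp_all add: z_def continuous_on_picard solution_on_continuous[OF x])
  have inc: "norm (z (Suc n) t - z n t) \<le> \<delta> * (B * T) ^ n / fact n" if t: "t \<in> {0..T}" for n t
  proof -
    have "norm (z (Suc n) t - z n t) \<le> \<delta> * (B * t) ^ n / fact n"
      using picard_iterates_increment_le[OF x \<open>B \<ge> 0\<close> B init] t by (simp add: z_def \<delta>_def)
    also have "\<dots> \<le> \<delta> * (B * T) ^ n / fact n"
      using t \<open>B \<ge> 0\<close> by (auto simp: \<delta>_def intro!: divide_right_mono mult_left_mono power_mono mult_nonneg_nonneg)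
    finally show ?thesis .
  qed
  have tube: "norm (z n t - x t) < \<rho>" if t: "t \<in> {0..T}" for n t
    using norm_telescope_le_exp[of n "\<lambda>k. z k t" \<delta> "B * T"] inc[OF t] init \<open>T \<ge> 0\<close> \<open>B \<ge> 0\<close>
    by (simp add: z_def \<delta>_def)
  have "(\<lambda>n. \<delta> * (B * T) ^ n / fact n) = (\<lambda>n. \<delta> * (inverse (fact n) * (B * T) ^ n))"
    by (simp add: divide_inverse ac_simps)
  then have "summable (\<lambda>n. \<delta> * (B * T) ^ n / fact n)"
    using summable_mult[OF summable_exp[of "B * T"], of \<delta>] by simp
  then have "uniform_limit {0..T} (\<lambda>n t. \<Sum>k<n. z (Suc k) t - z k t) (\<lambda>t. \<Sum>k. z (Suc k) t - z k t) sequentially"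
    using inc by (intro Weierstrass_m_test) auto
  then have "uniform_limit {0..T} (\<lambda>n t. x t + (\<Sum>k<n. z (Suc k) t - z k t))
      (\<lambda>t. x t + (\<Sum>k. z (Suc k) t - z k t)) sequentially"
    by (intro uniform_limit_intros)
  moreover have "(\<lambda>n t. x t + (\<Sum>k<n. z (Suc k) t - z k t)) = z"
    using sum_lessThan_telescope[of "\<lambda>k. z k _"] by (simp add: fun_eq_iff z_def)
  ultimately obtain y where lim: "uniform_limit {0..T} z y sequentially"
    by auto
  have y_cont: "continuous_on {0..T} y"
    by (rule uniform_limit_theorem[OF always_eventually lim]) (use z_cont in auto)
  have y_tube: "norm (y t - x t) < \<rho>" if t: "t \<in> {0..T}" for t
  proof -
    have "(\<lambda>n. norm (z n t - x t)) \<longlonglongrightarrow> norm (y t - x t)"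
      by (intro tendsto_intros tendsto_uniform_limitI[OF lim t])
    then have "norm (y t - x t) \<le> \<delta> * exp (B * T)"
      using norm_telescope_le_exp[of _ "\<lambda>k. z k t" \<delta> "B * T"] inc[OF t] \<open>T \<ge> 0\<close> \<open>B \<ge> 0\<close>
      by (intro LIMSEQ_le_const2) (auto simp: z_def \<delta>_def)
    then show ?thesis
      using init by (simp add: \<delta>_def)
  qed
  have "y t = picard a y t" if t: "t \<in> {0..T}" for t
  proof (rule LIMSEQ_unique)
    show "(\<lambda>n. z (Suc n) t) \<longlonglongrightarrow> y t"
      using LIMSEQ_Suc[OF tendsto_uniform_limitI[OF lim t]] .
    have lip: "norm (f (\<tau>, z n \<tau>) - f (\<tau>, y \<tau>)) \<le> B * norm (z n \<tau> - y \<tau>)"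
      if "\<tau> \<in> {0..T}" for n \<tau>
      using B that tube[OF that, of n] y_tube[OF that]
      by (intro norm_f_diff_le[where c="x \<tau>" and \<rho>=\<rho>]) (auto simp: dist_norm norm_minus_commute)
    have "(\<lambda>n. picard a (z n) t) \<longlonglongrightarrow> picard a y t"
      by (rule tendsto_picard_uniform_limit[OF lim z_cont y_cont \<open>B \<ge> 0\<close> lip t])
    then show "(\<lambda>n. z (Suc n) t) \<longlonglongrightarrow> picard a y t"
      by (simp add: z_def)
  qed
  then show ?thesis
    using solution_on_if_picard_fixpoint[OF y_cont _ \<open>T \<ge> 0\<close>] that by blast
qed

lemma solution_lipschitz_initial:
  assumes y: "solution_on T y" and "T \<ge> 0"
  obtains r L where "r > 0" "L \<ge> 0"
    "\<And>y' t. solution_on T y' \<Longrightarrow> norm (y' 0 - y 0) < r \<Longrightarrow> t \<in> {0..T} \<Longrightarrow>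
       norm (y' t - y t) \<le> L * norm (y' 0 - y 0)"
proof -
  obtain \<rho> B where "\<rho> > 0" "B \<ge> 0"
    and B: "\<And>t z. t \<in> {0..T} \<Longrightarrow> norm (z - y t) < \<rho> \<Longrightarrow> norm (f' (t, z)) \<le> B"
    using f'_bounded_near_curve[OF solution_on_continuous[OF y]] by blast
  show thesis
  proof (rule that[of "\<rho> / exp (B * T)" "exp (B * T)"])
    fix y' t assume y': "solution_on T y'" "norm (y' 0 - y 0) < \<rho> / exp (B * T)" and t: "t \<in> {0..T}"
    have "norm (y' t - y t) \<le> exp (B * t) * norm (y' 0 - y 0)"
      using y' t \<open>T \<ge> 0\<close> \<open>B \<ge> 0\<close> B by (intro solution_diff_le_exp[OF y y'(1)]) (auto simp: pos_less_divide_eq)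
    also have "\<dots> \<le> exp (B * T) * norm (y' 0 - y 0)"
      using t \<open>B \<ge> 0\<close> by (intro mult_right_mono) (auto intro: mult_left_mono)
    finally show "norm (y' t - y t) \<le> exp (B * T) * norm (y' 0 - y 0)" .
  qed (use \<open>\<rho> > 0\<close> in auto)
qed

lemma solution_family_continuous:
  assumes "T \<ge> 0" and X: "\<And>s. s \<in> S \<Longrightarrow> solution_on T (X s) \<and> X s 0 = p + s *\<^sub>R d"
  shows "continuous_on (S \<times> {0..T}) (\<lambda>(s, t). X s t)"
  unfolding continuous_on_def
proof (safe)
  fix s0 t0 assume s0: "s0 \<in> S" and t0: "t0 \<in> {0..T}"
  let ?F = "at (s0, t0) within S \<times> {0..T}"
  obtain r L where "r > 0" "L \<ge> 0" and L: "\<And>y' t. solution_on T y' \<Longrightarrow> norm (y' 0 - X s0 0) < r \<Longrightarrow>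
      t \<in> {0..T} \<Longrightarrow> norm (y' t - X s0 t) \<le> L * norm (y' 0 - X s0 0)"
    using solution_lipschitz_initial[OF conjunct1[OF X[OF s0]] \<open>T \<ge> 0\<close>] by blast
  have fst_lim: "(fst \<longlongrightarrow> s0) ?F"
    using tendsto_fst[OF tendsto_ident_at[of "(s0, t0)" "S \<times> {0..T}"]] by simp
  have in_domain: "\<forall>\<^sub>F q in ?F. q \<in> S \<times> {0..T}"
    by (simp add: eventually_at_filter)
  have "\<forall>\<^sub>F q in ?F. dist (fst q) s0 < r / (norm d + 1)"
    using fst_lim \<open>r > 0\<close> by (intro tendstoD) (simp_all add: add_nonneg_pos)
  then have near: "\<forall>\<^sub>F q in ?F. norm (X (fst q) (snd q) - X s0 (snd q)) \<le> L * (norm (fst q - s0) * norm d)"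
    using in_domain
  proof eventually_elim
    case (elim q)
    have "norm (fst q - s0) * norm d \<le> r / (norm d + 1) * norm d"
      using elim(1) by (intro mult_right_mono) (auto simp: dist_norm)
    also have "\<dots> < r"
      using \<open>r > 0\<close> add_nonneg_pos[OF norm_ge_zero[of d] zero_less_one]
      by (simp add: pos_divide_less_eq algebra_simps)
    finally have "norm (X (fst q) 0 - X s0 0) < r"
      using X[of "fst q"] X[OF s0] elim(2) by (auto simp: algebra_simps simp flip: scaleR_diff_left)
    then show ?case
      using L[of "X (fst q)" "snd q"] X[of "fst q"] X[OF s0] elim(2)
      by (auto simp: algebra_simps simp flip: scaleR_diff_left)
  qed
  have "((\<lambda>q. L * (norm (fst q - s0) * norm d)) \<longlongrightarrow> L * (norm (s0 - s0) * norm d)) ?F"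
    by (intro tendsto_mult tendsto_const tendsto_norm tendsto_diff fst_lim)
  then have "((\<lambda>q. X (fst q) (snd q) - X s0 (snd q)) \<longlongrightarrow> 0) ?F"
    using Lim_null_comparison[OF near] by simp
  moreover have "(snd \<longlongrightarrow> t0) ?F"
    using tendsto_snd[OF tendsto_ident_at[of "(s0, t0)" "S \<times> {0..T}"]] by simp
  then have "((\<lambda>q. X s0 (snd q)) \<longlongrightarrow> X s0 t0) ?F"
    by (rule continuous_on_tendsto_compose[OF solution_on_continuous[OF conjunct1[OF X[OF s0]]] _ t0])
      (use in_domain in \<open>auto elim: eventually_mono\<close>)
  ultimately have "((\<lambda>q. (X (fst q) (snd q) - X s0 (snd q)) + X s0 (snd q)) \<longlongrightarrow> 0 + X s0 t0) ?F"
    by (rule tendsto_add)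
  then show "((\<lambda>(s, t). X s t) \<longlongrightarrow> X s0 t0) ?F"
    by (simp add: case_prod_beta')
qed

text \<open>Picard iteration in a tube around \<open>Y\<close>, started at a solution close to \<open>Y\<close>.\<close>

lemma solutions_exist_beyond:
  assumes "T \<ge> 0" and Y: "continuous_on {0..T} Y"
    and approx: "\<And>\<eta>. \<eta> > 0 \<Longrightarrow> \<exists>s x. \<sigma> - \<eta> < s \<and> s \<le> \<sigma> \<and> solution_on T x \<and> x 0 = p + s *\<^sub>R d \<and>
                  (\<forall>t\<in>{0..T}. norm (x t - Y t) < \<eta>)"
  obtains r where "r > 0" "\<And>s'. s' \<in> {\<sigma>..<\<sigma> + r} \<Longrightarrow> \<exists>y. solution_on T y \<and> y 0 = p + s' *\<^sub>R d"
proof -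
  obtain \<rho> B where "\<rho> > 0" "B \<ge> 0"
    and B: "\<And>t z. t \<in> {0..T} \<Longrightarrow> norm (z - Y t) < \<rho> \<Longrightarrow> norm (f' (t, z)) \<le> B"
    using f'_bounded_near_curve[OF Y] by blast
  define E where "E = exp (B * T)"
  define m where "m = norm d + 1"
  define r where "r = \<rho> / (4 * m * E)"
  have "m > 0"
    using norm_ge_zero[of d] unfolding m_def by linarith
  have "E > 0"
    by (simp add: E_def)
  then have "r > 0"
    unfolding r_def using \<open>\<rho> > 0\<close> \<open>m > 0\<close> by (intro divide_pos_pos mult_pos_pos) auto
  obtain s0 x where s0: "\<sigma> - min (\<rho>/2) r < s0" "s0 \<le> \<sigma>" and x: "solution_on T x" "x 0 = p + s0 *\<^sub>R d"
    and xY: "\<And>t. t \<in> {0..T} \<Longrightarrow> norm (x t - Y t) < min (\<rho>/2) r"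
    using approx[of "min (\<rho>/2) r"] \<open>\<rho> > 0\<close> \<open>r > 0\<close> by auto
  have Bx: "norm (f' (t, z)) \<le> B" if "t \<in> {0..T}" "norm (z - x t) < \<rho>/2" for t z
    using B[of t z] norm_triangle_ineq[of "z - x t" "x t - Y t"] xY[of t] that by simp
  show thesis
  proof (rule that[OF \<open>r > 0\<close>])
    fix s' assume s': "s' \<in> {\<sigma>..<\<sigma> + r}"
    then have "0 \<le> s' - s0" "s' - s0 < 2 * r"
      using s0 by auto
    moreover have "p + s' *\<^sub>R d - x 0 = (s' - s0) *\<^sub>R d"
      using x(2) by (simp add: algebra_simps)
    ultimately have "norm (p + s' *\<^sub>R d - x 0) \<le> 2 * r * norm d"
      by (simp add: mult_right_mono)
    then have "norm (p + s' *\<^sub>R d - x 0) * E \<le> 2 * r * norm d * E"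
      using \<open>E > 0\<close> by simp
    also have "\<dots> = \<rho> / 2 * (norm d / m)"
      using \<open>E > 0\<close> \<open>m > 0\<close> by (simp add: r_def field_simps)
    also have "\<dots> < \<rho> / 2"
      using \<open>\<rho> > 0\<close> \<open>m > 0\<close> by (simp add: m_def field_simps)
    finally show "\<exists>y. solution_on T y \<and> y 0 = p + s' *\<^sub>R d"
      using solution_exists_near[OF x(1) \<open>T \<ge> 0\<close> \<open>B \<ge> 0\<close> Bx] unfolding E_def by metis
  qed
qed

text \<open>Compactness of the parameter rectangle makes the oscillation bound uniform.\<close>

lemma solution_family_f'_oscillation:
  assumes "T \<ge> 0" and X: "\<And>s. s \<in> {\<alpha>..\<beta>} \<Longrightarrow> solution_on T (X s) \<and> X s 0 = p + s *\<^sub>R d"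
    and "\<epsilon> > 0"
  obtains \<eta> where "\<eta> > 0"
    "\<And>s s' \<tau> \<sigma>. s \<in> {\<alpha>..\<beta>} \<Longrightarrow> s' \<in> {\<alpha>..\<beta>} \<Longrightarrow> \<bar>s' - s\<bar> < \<eta> \<Longrightarrow> \<tau> \<in> {0..T} \<Longrightarrow>
       \<sigma> \<in> {0..1} \<Longrightarrow> norm (f' (\<tau>, X s \<tau> + \<sigma> *\<^sub>R (X s' \<tau> - X s \<tau>)) - f' (\<tau>, X s \<tau>)) \<le> \<epsilon>"
proof -
  define R where "R = {\<alpha>..\<beta>} \<times> {0..T}"
  have X_cont: "continuous_on R (\<lambda>(s, t). X s t)"
    unfolding R_def by (rule solution_family_continuous[OF \<open>T \<ge> 0\<close> X])
  have "compact R"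
    unfolding R_def by (intro compact_Times compact_Icc)
  define K where "K = (\<lambda>(s, t). (t, X s t)) ` R"
  have K: "compact K" "K \<subseteq> {0..} \<times> UNIV"
    unfolding K_def using X_cont \<open>compact R\<close>
    by (auto simp: R_def case_prod_beta' intro!: compact_continuous_image continuous_intros)
  obtain \<delta> where "\<delta> > 0"
    and \<delta>: "\<And>k q. k \<in> K \<Longrightarrow> q \<in> {0..} \<times> UNIV \<Longrightarrow> dist q k < \<delta> \<Longrightarrow> dist (f' q) (f' k) < \<epsilon>"
    using continuous_on_uniform_near_compact[OF K f'_cont \<open>\<epsilon> > 0\<close>] by blast
  obtain \<eta> where "\<eta> > 0"
    and \<eta>: "\<And>q q'. q \<in> R \<Longrightarrow> q' \<in> R \<Longrightarrow> dist q' q < \<eta> \<Longrightarrow>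
      dist ((\<lambda>(s, t). X s t) q') ((\<lambda>(s, t). X s t) q) < \<delta>"
    using compact_uniformly_continuous[OF X_cont \<open>compact R\<close>] \<open>\<delta> > 0\<close>
    unfolding uniformly_continuous_on_def by metis
  show thesis
  proof (rule that[OF \<open>\<eta> > 0\<close>])
    fix s s' \<tau> \<sigma> :: real assume s: "s \<in> {\<alpha>..\<beta>}" "s' \<in> {\<alpha>..\<beta>}" "\<bar>s' - s\<bar> < \<eta>"
      and \<tau>: "\<tau> \<in> {0..T}" and \<sigma>: "\<sigma> \<in> {0..1}"
    have "norm (X s' \<tau> - X s \<tau>) < \<delta>"
      using \<eta>[of "(s, \<tau>)" "(s', \<tau>)"] s \<tau> by (simp add: R_def dist_Pair_Pair dist_norm)
    moreover have "norm (\<sigma> *\<^sub>R (X s' \<tau> - X s \<tau>)) \<le> norm (X s' \<tau> - X s \<tau>)"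
      using \<sigma> by (simp add: mult_left_le_one_le)
    ultimately have "dist (\<tau>, X s \<tau> + \<sigma> *\<^sub>R (X s' \<tau> - X s \<tau>)) (\<tau>, X s \<tau>) < \<delta>"
      by (simp add: dist_Pair_Pair dist_norm)
    moreover have "(\<tau>, X s \<tau>) \<in> K"
      using s \<tau> by (force simp: K_def R_def)
    ultimately show "norm (f' (\<tau>, X s \<tau> + \<sigma> *\<^sub>R (X s' \<tau> - X s \<tau>)) - f' (\<tau>, X s \<tau>)) \<le> \<epsilon>"
      using \<delta> \<tau> by (fastforce simp: dist_norm)
  qed
qed

end

section \<open>Transformed differences of solutions\<close>

locale transformed_ode = c1_ode f f' for f :: "real \<times> 'v::banach \<Rightarrow> 'v" and f' +
  fixes \<Theta> :: "real \<times> 'v \<Rightarrow> ('v \<Rightarrow>\<^sub>L 'w::banach)"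
    and \<Theta>' :: "real \<times> 'v \<Rightarrow> (real \<times> 'v) \<Rightarrow>\<^sub>L ('v \<Rightarrow>\<^sub>L 'w)"
    and C lam :: real
  assumes \<Theta>_deriv: "\<And>p. p \<in> {0..} \<times> UNIV \<Longrightarrow>
             (\<Theta> has_derivative blinfun_apply (\<Theta>' p)) (at p within {0..} \<times> UNIV)"
    and \<Theta>_GL: "\<And>t u. t \<ge> 0 \<Longrightarrow> bij (blinfun_apply (\<Theta> (t,u)))"
    and C_fin: "bdd_above ((\<lambda>(t,u). max (norm (\<Theta> (t,u))) (onorm (inv (blinfun_apply (\<Theta> (t,u))))))
                    ` ({0..} \<times> UNIV))"
    and C_def: "C = (SUP (t,u)\<in>{0..} \<times> UNIV.
                    max (norm (\<Theta> (t,u))) (onorm (inv (blinfun_apply (\<Theta> (t,u))))))"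
    and M_bound: "\<And>t u. t \<ge> 0 \<Longrightarrow>
             logM (Gop f \<Theta> \<Theta>' f' t u \<circ> inv (blinfun_apply (\<Theta> (t,u)))) \<le> lam"
begin

lemma bounded_linear_inv_Theta: "t \<ge> 0 \<Longrightarrow> bounded_linear (inv (\<Theta> (t, u)))"
  by (rule bounded_linear_inv[OF blinfun.bounded_linear_right \<Theta>_GL])

lemma inv_Theta_apply: "t \<ge> 0 \<Longrightarrow> inv (\<Theta> (t, u)) (\<Theta> (t, u) v) = v"
  using \<Theta>_GL by (simp add: bij_is_inj)

lemma norm_Theta_onorm_inv_le:
  assumes "t \<ge> 0"
  shows "norm (\<Theta> (t, u)) \<le> C" "onorm (inv (\<Theta> (t, u))) \<le> C"
proof -
  have "(\<lambda>(t,u). max (norm (\<Theta> (t,u))) (onorm (inv (blinfun_apply (\<Theta> (t,u)))))) (t, u) \<le> C"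
    unfolding C_def by (rule cSUP_upper[OF _ C_fin]) (use assms in auto)
  then show "norm (\<Theta> (t, u)) \<le> C" "onorm (inv (\<Theta> (t, u))) \<le> C"
    by simp_all
qed

lemma C_nonneg: "C \<ge> 0"
  using norm_Theta_onorm_inv_le(1)[of 0] norm_ge_zero order_trans by blast

lemma norm_Theta_apply_le: "t \<ge> 0 \<Longrightarrow> norm (\<Theta> (t, u) v) \<le> C * norm v"
  using norm_blinfun[of "\<Theta> (t, u)" v] norm_Theta_onorm_inv_le(1)
  by (meson mult_right_mono norm_ge_zero order_trans)

lemma norm_le_Theta_apply: "t \<ge> 0 \<Longrightarrow> norm v \<le> C * norm (\<Theta> (t, u) v)"
  using onorm[OF bounded_linear_inv_Theta, of t u "\<Theta> (t, u) v"] norm_Theta_onorm_inv_le(2)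
  by (simp add: inv_Theta_apply) (meson mult_right_mono norm_ge_zero order_trans)

lemma rsip_Gop_le:
  assumes "t \<ge> 0" "w \<noteq> 0"
  shows "rsip w (Gop f \<Theta> \<Theta>' f' t u (inv (\<Theta> (t, u)) w)) \<le> lam * (norm w)\<^sup>2"
proof -
  have "bounded_linear (Gop f \<Theta> \<Theta>' f' t u)"
    unfolding Gop_def
    by (intro bounded_linear_add bounded_linear_compose[OF blinfun.bounded_linear_right]
        blinfun.bounded_linear_right bounded_linear_Pair bounded_linear_zero bounded_linear_ident)
  then have "bounded_linear (Gop f \<Theta> \<Theta>' f' t u \<circ> inv (\<Theta> (t, u)))"
    unfolding o_def by (rule bounded_linear_compose[OF _ bounded_linear_inv_Theta[OF \<open>t \<ge> 0\<close>]])
  from rsip_le_of_logM_le[OF this M_bound[OF \<open>t \<ge> 0\<close>] \<open>w \<noteq> 0\<close>] show ?thesis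
    by simp
qed

text \<open>The product rule: \<open>G\<close> collects the terms of the derivative of \<open>\<Theta>(t, x t) (y t - x t)\<close>
  that are linear in \<open>y - x\<close>; the rest is \<open>\<Theta>\<close> applied to the linearization error of \<open>f\<close>.\<close>

lemma Theta_diff_has_vector_derivative:
  assumes x: "solution_on T x" and y: "solution_on T y" and t: "t \<in> {0..T}"
  shows "((\<lambda>t. \<Theta> (t, x t) (y t - x t)) has_vector_derivative
      Gop f \<Theta> \<Theta>' f' t (x t) (y t - x t) + \<Theta> (t, x t) (f (t, y t) - f (t, x t) - f' (t, x t) (0, y t - x t)))
      (at t within {0..T})"
proof -
  have xd: "(x has_vector_derivative f (t, x t)) (at t within {0..T})"
    and yd: "(y has_vector_derivative f (t, y t)) (at t within {0..T})"
    using x y t unfolding solution_on_def by auto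
  have "((\<lambda>t. (t, x t)) has_vector_derivative (1, f (t, x t))) (at t within {0..T})"
    by (intro derivative_intros xd)
  moreover have "(\<Theta> has_derivative \<Theta>' (t, x t)) (at (t, x t) within (\<lambda>t. (t, x t)) ` {0..T})"
    by (rule has_derivative_subset[OF \<Theta>_deriv]) (use t in auto)
  ultimately have "((\<lambda>t. \<Theta> (t, x t)) has_vector_derivative \<Theta>' (t, x t) (1, f (t, x t))) (at t within {0..T})"
    using vector_derivative_diff_chain_within by (fastforce simp: o_def)
  from blinfun.has_vector_derivative[OF this has_vector_derivative_diff[OF yd xd]]
  have "((\<lambda>t. \<Theta> (t, x t) (y t - x t)) has_vector_derivative
      \<Theta> (t, x t) (f (t, y t) - f (t, x t)) + \<Theta>' (t, x t) (1, f (t, x t)) (y t - x t)) (at t within {0..T})" .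
  moreover have "\<Theta>' (t, x t) (1, f (t, x t)) = \<Theta>' (t, x t) (1, 0) + \<Theta>' (t, x t) (0, f (t, x t))"
    by (simp flip: blinfun.add_right)
  ultimately show ?thesis
    by (simp add: Gop_def blinfun.add_left blinfun.add_right blinfun.diff_right algebra_simps)
qed

lemma rsip_Theta_diff_le:
  assumes "t \<ge> 0" and w: "w = \<Theta> (t, x) (y - x)" "w \<noteq> 0" and "\<epsilon> \<ge> 0"
    and lin: "norm (f (t, y) - f (t, x) - f' (t, x) (0, y - x)) \<le> norm (y - x) * \<epsilon>"
  shows "rsip w (Gop f \<Theta> \<Theta>' f' t x (y - x) + \<Theta> (t, x) (f (t, y) - f (t, x) - f' (t, x) (0, y - x)))
    \<le> (lam + C * C * \<epsilon>) * norm w * norm w"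
proof -
  let ?r = "f (t, y) - f (t, x) - f' (t, x) (0, y - x)"
  have "norm (\<Theta> (t, x) ?r) \<le> C * (norm (y - x) * \<epsilon>)"
    using norm_Theta_apply_le[OF \<open>t \<ge> 0\<close>] lin C_nonneg by (meson mult_left_mono order_trans)
  also have "\<dots> \<le> C * (C * norm w * \<epsilon>)"
    using norm_le_Theta_apply[OF \<open>t \<ge> 0\<close>] C_nonneg \<open>\<epsilon> \<ge> 0\<close> w(1)
    by (intro mult_left_mono mult_right_mono) auto
  finally have "norm w * norm (\<Theta> (t, x) ?r) \<le> norm w * (C * (C * norm w * \<epsilon>))"
    by (rule mult_left_mono) simp
  moreover have "rsip w (Gop f \<Theta> \<Theta>' f' t x (y - x)) \<le> lam * (norm w)\<^sup>2"
    using rsip_Gop_le[OF \<open>t \<ge> 0\<close> w(2), of x] w(1) by (simp add: inv_Theta_apply[OF \<open>t \<ge> 0\<close>])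
  ultimately show ?thesis
    using rsip_add_le[of w "Gop f \<Theta> \<Theta>' f' t x (y - x)" "\<Theta> (t, x) ?r"]
    by (simp add: power2_eq_square algebra_simps)
qed

lemma norm_Theta_diff_le_exp:
  assumes x: "solution_on T x" and y: "solution_on T y" and "\<epsilon> \<ge> 0"
    and osc: "\<And>t s. t \<in> {0..T} \<Longrightarrow> s \<in> {0..1} \<Longrightarrow> norm (f' (t, x t + s *\<^sub>R (y t - x t)) - f' (t, x t)) \<le> \<epsilon>"
    and t: "t \<in> {0..T}"
  shows "norm (\<Theta> (t, x t) (y t - x t)) \<le> exp ((lam + C * C * \<epsilon>) * t) * norm (\<Theta> (0, x 0) (y 0 - x 0))"
proof -
  define \<mu> where "\<mu> = lam + C * C * \<epsilon>"
  define w where "w t = \<Theta> (t, x t) (y t - x t)" for t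
  define w' where "w' t = Gop f \<Theta> \<Theta>' f' t (x t) (y t - x t)
      + \<Theta> (t, x t) (f (t, y t) - f (t, x t) - f' (t, x t) (0, y t - x t))" for t
  have w_deriv: "(w has_vector_derivative w' t) (at t within {0..T})" if "t \<in> {0..T}" for t
    using Theta_diff_has_vector_derivative[OF x y that] unfolding w_def w'_def .
  have "norm (w t) \<le> exp (\<mu> * (t - 0)) * norm (w 0)"
  proof (rule Dini_Gronwall[where R="norm (w 0) * max 1 (exp (\<mu> * (T - 0))) + 1", OF _ _ _ _ t])
    have "continuous_on {0..T} w"
      using w_deriv has_vector_derivative_continuous unfolding continuous_on_eq_continuous_within
      by blast
    then show "continuous_on {0..T} (\<lambda>t. norm (w t))"
      by (rule continuous_on_norm)
  next
    fix t e :: real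
    assume t: "t \<in> {0..<T}" and "e > 0"
    have der: "(w has_vector_derivative w' t) (at t within {t..T})"
      by (rule has_vector_derivative_within_subset[OF w_deriv]) (use t in auto)
    have lin: "norm (f (t, y t) - f (t, x t) - f' (t, x t) (0, y t - x t)) \<le> norm (y t - x t) * \<epsilon>"
      using t osc by (intro norm_f_linearization_le) auto
    show "\<forall>\<^sub>F h in at_right 0. norm (w (t + h)) \<le> norm (w t) + h * (\<mu> * norm (w t) + e)"
    proof (rule norm_right_Dini_le[OF der _ _ _ \<open>e > 0\<close>])
      show "rsip (w t) (w' t) \<le> \<mu> * norm (w t) * norm (w t)" if "w t \<noteq> 0"
        using rsip_Theta_diff_le[OF _ w_def that \<open>\<epsilon> \<ge> 0\<close> lin] t unfolding w'_def \<mu>_def by simp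
      show "norm (w' t) \<le> \<mu> * norm (w t)" if "w t = 0"
      proof -
        have "y t = x t"
          using norm_le_Theta_apply[of t "y t - x t" "x t"] that t by (simp add: w_def)
        then show ?thesis
          using that by (simp add: w'_def Gop_def flip: zero_prod_def)
      qed
    qed (use t in simp)
  qed simp_all
  then show ?thesis
    by (simp add: w_def \<mu>_def)
qed

lemma solution_family_diff_le_eps:
  assumes "T \<ge> 0" "\<alpha> \<le> \<beta>" "\<epsilon> > 0"
    and X: "\<And>s. s \<in> {\<alpha>..\<beta>} \<Longrightarrow> solution_on T (X s) \<and> X s 0 = p + s *\<^sub>R d"
    and t: "t \<in> {0..T}"
  shows "norm (X \<beta> t - X \<alpha> t) \<le> C * C * exp ((lam + C * C * \<epsilon>) * t) * norm d * (\<beta> - \<alpha>)"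
proof -
  obtain \<eta> where "\<eta> > 0" and osc: "\<And>s s' \<tau> \<sigma>. s \<in> {\<alpha>..\<beta>} \<Longrightarrow> s' \<in> {\<alpha>..\<beta>} \<Longrightarrow> \<bar>s' - s\<bar> < \<eta> \<Longrightarrow>
      \<tau> \<in> {0..T} \<Longrightarrow> \<sigma> \<in> {0..1} \<Longrightarrow> norm (f' (\<tau>, X s \<tau> + \<sigma> *\<^sub>R (X s' \<tau> - X s \<tau>)) - f' (\<tau>, X s \<tau>)) \<le> \<epsilon>"
    using solution_family_f'_oscillation[OF \<open>T \<ge> 0\<close> X \<open>\<epsilon> > 0\<close>] by blast
  show ?thesis
  proof (rule norm_diff_le_of_local_le[where Z="\<lambda>s. X s t", OF \<open>\<alpha> \<le> \<beta>\<close> \<open>\<eta> > 0\<close>])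
    fix s s' assume s: "\<alpha> \<le> s" "s \<le> s'" "s' \<le> \<beta>" "s' - s < \<eta>"
    have sol: "solution_on T (X s)" "solution_on T (X s')" and init: "X s' 0 - X s 0 = (s' - s) *\<^sub>R d"
      using X[of s] X[of s'] s by (auto simp: algebra_simps)
    have "norm (X s' t - X s t) \<le> C * norm (\<Theta> (t, X s t) (X s' t - X s t))"
      using t by (intro norm_le_Theta_apply) simp
    also have "\<dots> \<le> C * (exp ((lam + C * C * \<epsilon>) * t) * norm (\<Theta> (0, X s 0) (X s' 0 - X s 0)))"
      using osc s t \<open>\<epsilon> > 0\<close> C_nonneg
      by (intro mult_left_mono norm_Theta_diff_le_exp[OF sol]) auto
    also have "\<dots> \<le> C * (exp ((lam + C * C * \<epsilon>) * t) * (C * ((s' - s) * norm d)))"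
      using norm_Theta_apply_le[of 0 "X s 0" "X s' 0 - X s 0"] init s C_nonneg
      by (intro mult_left_mono) auto
    finally show "norm (X s' t - X s t) \<le> C * C * exp ((lam + C * C * \<epsilon>) * t) * norm d * (s' - s)"
      by (simp add: algebra_simps)
  qed
qed

lemma solution_family_diff_le:
  assumes "T \<ge> 0" "\<alpha> \<le> \<beta>"
    and X: "\<And>s. s \<in> {\<alpha>..\<beta>} \<Longrightarrow> solution_on T (X s) \<and> X s 0 = p + s *\<^sub>R d"
    and t: "t \<in> {0..T}"
  shows "norm (X \<beta> t - X \<alpha> t) \<le> C * C * exp (lam * t) * norm d * (\<beta> - \<alpha>)"
proof -
  have "((\<lambda>\<epsilon>. C * C * exp ((lam + C * C * \<epsilon>) * t) * norm d * (\<beta> - \<alpha>))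
      \<longlongrightarrow> C * C * exp ((lam + C * C * 0) * t) * norm d * (\<beta> - \<alpha>)) (at_right 0)"
    by (intro tendsto_intros)
  moreover have "\<forall>\<^sub>F \<epsilon> in at_right 0.
      norm (X \<beta> t - X \<alpha> t) \<le> C * C * exp ((lam + C * C * \<epsilon>) * t) * norm d * (\<beta> - \<alpha>)"
    using eventually_at_right_less[of 0]
    by eventually_elim (rule solution_family_diff_le_eps[OF assms(1,2) _ X t])
  ultimately show ?thesis
    using tendsto_lowerbound[OF _ _ trivial_limit_at_right_real] by fastforce
qed

lemma solution_family_limit:
  assumes "T \<ge> 0" "\<sigma> > 0" and X: "\<And>s. s \<in> {0..<\<sigma>} \<Longrightarrow> solution_on T (X s) \<and> X s 0 = p + s *\<^sub>R d"
  obtains Y K where "continuous_on {0..T} Y"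
    "\<And>s t. s \<in> {0..<\<sigma>} \<Longrightarrow> t \<in> {0..T} \<Longrightarrow> norm (X s t - Y t) \<le> K * (\<sigma> - s)"
proof -
  define K where "K = C * C * exp (\<bar>lam\<bar> * T) * norm d"
  have "K \<ge> 0"
    by (simp add: K_def)
  have lip: "norm (X s' t - X s t) \<le> K * (s' - s)" if "0 \<le> s" "s \<le> s'" "s' < \<sigma>" "t \<in> {0..T}" for s s' t
  proof -
    have "norm (X s' t - X s t) \<le> C * C * exp (lam * t) * norm d * (s' - s)"
      using that X by (intro solution_family_diff_le[OF \<open>T \<ge> 0\<close>]) auto
    also have "\<dots> \<le> K * (s' - s)"
    proof -
      have "lam * t \<le> \<bar>lam\<bar> * T"
        using mult_mono[of lam "\<bar>lam\<bar>" t T] that by auto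
      then have "C * C * exp (lam * t) * (norm d * (s' - s)) \<le> C * C * exp (\<bar>lam\<bar> * T) * (norm d * (s' - s))"
        using that by (intro mult_right_mono mult_left_mono) auto
      then show ?thesis
        unfolding K_def by (simp add: mult.assoc)
    qed
    finally show ?thesis .
  qed
  define F where "F = at \<sigma> within {0..<\<sigma>}"
  have "F \<noteq> bot"
    using \<open>\<sigma> > 0\<close> by (simp add: F_def trivial_limit_within islimpt_Ico)
  define Y where "Y t = Lim F (\<lambda>s. X s t)" for t
  have Y: "norm (X s t - Y t) \<le> K * (\<sigma> - s)" if s: "s \<in> {0..<\<sigma>}" and t: "t \<in> {0..T}" for s t
  proof -
    obtain l where l: "((\<lambda>s. X s t) \<longlongrightarrow> l) F"
      and "\<And>s'. s' \<in> {0..<\<sigma>} \<Longrightarrow> norm (X s' t - l) \<le> K * (\<sigma> - s')"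
      unfolding F_def
      by (rule Lipschitz_limit_at_left[OF \<open>\<sigma> > 0\<close> \<open>K \<ge> 0\<close>, of "\<lambda>s. X s t"]) (use lip t in auto)
    moreover have "Y t = l"
      unfolding Y_def using tendsto_Lim[OF \<open>F \<noteq> bot\<close> l] .
    ultimately show ?thesis
      using s by simp
  qed
  have "uniform_limit {0..T} X Y F"
  proof (rule uniform_limitI)
    fix e :: real assume "e > 0"
    have "((\<lambda>s. K * (\<sigma> - s)) \<longlongrightarrow> K * (\<sigma> - \<sigma>)) F"
      unfolding F_def by (intro tendsto_intros)
    then have "\<forall>\<^sub>F s in F. K * (\<sigma> - s) < e"
      using \<open>e > 0\<close> by (auto dest: order_tendstoD(2))
    moreover have "\<forall>\<^sub>F s in F. s \<in> {0..<\<sigma>}"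
      by (simp add: F_def eventually_at_filter)
    ultimately show "\<forall>\<^sub>F s in F. \<forall>t\<in>{0..T}. dist (X s t) (Y t) < e"
      by eventually_elim (use Y in \<open>force simp: dist_norm\<close>)
  qed
  moreover have "\<forall>\<^sub>F s in F. continuous_on {0..T} (X s)"
    using X solution_on_continuous by (auto simp: F_def eventually_at_filter)
  ultimately have "continuous_on {0..T} Y"
    using uniform_limit_theorem[OF _ _ \<open>F \<noteq> bot\<close>] by blast
  with Y show thesis
    using that by blast
qed

lemma solutions_exist_beyond_segment:
  assumes "T \<ge> 0" "\<sigma> \<ge> 0" and y0: "solution_on T y0" "y0 0 = p"
    and below: "\<And>s. s \<in> {0..<\<sigma>} \<Longrightarrow> \<exists>y. solution_on T y \<and> y 0 = p + s *\<^sub>R d"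
  obtains r where "r > 0" "\<And>s'. s' \<in> {\<sigma>..<\<sigma> + r} \<Longrightarrow> \<exists>y. solution_on T y \<and> y 0 = p + s' *\<^sub>R d"
proof (cases "\<sigma> = 0")
  case True
  show thesis
    by (rule solutions_exist_beyond[OF \<open>T \<ge> 0\<close> solution_on_continuous[OF y0(1)], where \<sigma>=\<sigma> and p=p and d=d])
      (use that y0 True in \<open>auto intro!: exI[of _ 0] exI[of _ y0]\<close>)
next
  case False
  define X where "X s = (SOME y. solution_on T y \<and> y 0 = p + s *\<^sub>R d)" for s
  have X: "solution_on T (X s) \<and> X s 0 = p + s *\<^sub>R d" if "s \<in> {0..<\<sigma>}" for s
    unfolding X_def using below[OF that] by (rule someI_ex)
  obtain Y K where Y: "continuous_on {0..T} Y"
    and XY: "\<And>s t. s \<in> {0..<\<sigma>} \<Longrightarrow> t \<in> {0..T} \<Longrightarrow> norm (X s t - Y t) \<le> K * (\<sigma> - s)"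
    using solution_family_limit[OF \<open>T \<ge> 0\<close> _ X] \<open>\<sigma> \<ge> 0\<close> False by (metis order_le_less)
  show thesis
  proof (rule solutions_exist_beyond[OF \<open>T \<ge> 0\<close> Y])
    fix \<eta> :: real assume "\<eta> > 0"
    have "((\<lambda>s. K * (\<sigma> - s)) \<longlongrightarrow> K * (\<sigma> - \<sigma>)) (at \<sigma> within {0..<\<sigma>})"
      by (intro tendsto_intros)
    then have "\<forall>\<^sub>F s in at \<sigma> within {0..<\<sigma>}. K * (\<sigma> - s) < \<eta>"
      using \<open>\<eta> > 0\<close> by (auto dest: order_tendstoD(2))
    moreover have "\<forall>\<^sub>F s in at \<sigma> within {0..<\<sigma>}. \<sigma> - \<eta> < s"
      using \<open>\<eta> > 0\<close> by (intro order_tendstoD(1)[OF tendsto_ident_at]) simp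
    moreover have "\<forall>\<^sub>F s in at \<sigma> within {0..<\<sigma>}. s \<in> {0..<\<sigma>}"
      by (simp add: eventually_at_filter)
    ultimately have "\<forall>\<^sub>F s in at \<sigma> within {0..<\<sigma>}. K * (\<sigma> - s) < \<eta> \<and> \<sigma> - \<eta> < s \<and> s \<in> {0..<\<sigma>}"
      by eventually_elim blast
    moreover have "at \<sigma> within {0..<\<sigma>} \<noteq> bot"
      using \<open>\<sigma> \<ge> 0\<close> False by (simp add: trivial_limit_within islimpt_Ico)
    ultimately obtain s where s: "K * (\<sigma> - s) < \<eta>" "\<sigma> - \<eta> < s" "s \<in> {0..<\<sigma>}"
      using eventually_happens by blast
    then show "\<exists>s x. \<sigma> - \<eta> < s \<and> s \<le> \<sigma> \<and> solution_on T x \<and> x 0 = p + s *\<^sub>R d \<and>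
        (\<forall>t\<in>{0..T}. norm (x t - Y t) < \<eta>)"
      using X[OF s(3)] XY[OF s(3)] by (intro exI[of _ s] exI[of _ "X s"]) force
  qed (use that in blast)
qed

lemma solutions_exist_on_segment:
  assumes "T \<ge> 0" and y0: "solution_on T y0" and s: "s \<in> {0..1}"
  shows "\<exists>y. solution_on T y \<and> y 0 = y0 0 + s *\<^sub>R d"
proof -
  define S where "S = {\<sigma>\<in>{0..1}. \<forall>s\<in>{0..\<sigma>}. \<exists>y. solution_on T y \<and> y 0 = y0 0 + s *\<^sub>R d}"
  define \<sigma> where "\<sigma> = Sup S"
  have "0 \<in> S"
    using y0 by (auto simp: S_def)
  have "bdd_above S"
    by (rule bdd_aboveI[where M=1]) (simp add: S_def)
  have "0 \<le> \<sigma>"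
    unfolding \<sigma>_def by (rule cSup_upper[OF \<open>0 \<in> S\<close> \<open>bdd_above S\<close>])
  have "\<sigma> \<le> 1"
  proof -
    have "S \<noteq> {}" "\<And>x. x \<in> S \<Longrightarrow> x \<le> 1"
      using \<open>0 \<in> S\<close> by (blast, simp add: S_def)
    then show ?thesis
      unfolding \<sigma>_def by (rule cSup_least)
  qed
  have below: "\<exists>y. solution_on T y \<and> y 0 = y0 0 + s *\<^sub>R d" if s: "s \<in> {0..<\<sigma>}" for s
  proof -
    obtain \<sigma>' where "\<sigma>' \<in> S" "s < \<sigma>'"
      using less_cSupD[of S s] s \<open>0 \<in> S\<close> unfolding \<sigma>_def by auto
    then show ?thesis
      using s by (auto simp: S_def)
  qed
  obtain r where "r > 0" and beyond: "\<And>s'. s' \<in> {\<sigma>..<\<sigma> + r} \<Longrightarrow> \<exists>y. solution_on T y \<and> y 0 = y0 0 + s' *\<^sub>R d"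
    using solutions_exist_beyond_segment[OF \<open>T \<ge> 0\<close> \<open>0 \<le> \<sigma>\<close> y0 refl below] by blast
  have up_to: "\<exists>y. solution_on T y \<and> y 0 = y0 0 + s *\<^sub>R d" if "s \<in> {0..<\<sigma> + r}" for s
    using below beyond that by (cases "s < \<sigma>") auto
  have "\<sigma> = 1"
  proof (rule ccontr)
    assume "\<sigma> \<noteq> 1"
    then have "min 1 (\<sigma> + r/2) \<in> S"
      using up_to \<open>0 \<le> \<sigma>\<close> \<open>r > 0\<close> by (auto simp: S_def)
    then show False
      using cSup_upper[OF _ \<open>bdd_above S\<close>] \<open>\<sigma> \<le> 1\<close> \<open>\<sigma> \<noteq> 1\<close> \<open>r > 0\<close> unfolding \<sigma>_def
      by (fastforce simp: min_def split: if_splits)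
  qed
  then show ?thesis
    using up_to s \<open>r > 0\<close> by auto
qed

end

theorem mainTheorem3:
  fixes f :: "real \<times> 'v::banach \<Rightarrow> 'v"
    and f' :: "real \<times> 'v \<Rightarrow> (real \<times> 'v) \<Rightarrow>\<^sub>L 'v"
    and \<Theta> :: "real \<times> 'v \<Rightarrow> ('v \<Rightarrow>\<^sub>L 'w::banach)"
    and \<Theta>' :: "real \<times> 'v \<Rightarrow> (real \<times> 'v) \<Rightarrow>\<^sub>L ('v \<Rightarrow>\<^sub>L 'w)"
    and C lam :: real
    and u1 u2 :: "real \<Rightarrow> 'v"
  assumes f_deriv: "\<And>p. p \<in> {0..} \<times> UNIV \<Longrightarrow>
             (f has_derivative blinfun_apply (f' p)) (at p within {0..} \<times> UNIV)"
    and f'_cont: "continuous_on ({0..} \<times> UNIV) f'"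
    and \<Theta>_deriv: "\<And>p. p \<in> {0..} \<times> UNIV \<Longrightarrow>
             (\<Theta> has_derivative blinfun_apply (\<Theta>' p)) (at p within {0..} \<times> UNIV)"
    and \<Theta>'_cont: "continuous_on ({0..} \<times> UNIV) \<Theta>'"
    and \<Theta>_GL: "\<And>t u. t \<ge> 0 \<Longrightarrow> bij (blinfun_apply (\<Theta> (t,u)))"
    and C_fin: "bdd_above ((\<lambda>(t,u). max (norm (\<Theta> (t,u))) (onorm (inv (blinfun_apply (\<Theta> (t,u))))))
                    ` ({0..} \<times> UNIV))"
    and C_def: "C = (SUP (t,u)\<in>{0..} \<times> UNIV.
                    max (norm (\<Theta> (t,u))) (onorm (inv (blinfun_apply (\<Theta> (t,u))))))"
    and M_bound: "\<And>t u. t \<ge> 0 \<Longrightarrow>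
             logM (Gop f \<Theta> \<Theta>' f' t u \<circ> inv (blinfun_apply (\<Theta> (t,u)))) \<le> lam"
    and u1_sol: "\<And>t. t \<ge> 0 \<Longrightarrow> (u1 has_vector_derivative f (t, u1 t)) (at t within {0..})"
    and u2_sol: "\<And>t. t \<ge> 0 \<Longrightarrow> (u2 has_vector_derivative f (t, u2 t)) (at t within {0..})"
  shows "\<forall>t\<ge>0. norm (u1 t - u2 t) \<le> C\<^sup>2 * exp (lam * t) * norm (u1 0 - u2 0)"
proof -
  interpret transformed_ode f f' \<Theta> \<Theta>' C lam
    by unfold_locales (fact f_deriv f'_cont \<Theta>_deriv \<Theta>_GL C_fin C_def M_bound)+
  have solution: "solution_on T u"
    if "\<And>t. t \<ge> 0 \<Longrightarrow> (u has_vector_derivative f (t, u t)) (at t within {0..})" for T u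
    using that unfolding solution_on_def
    by (auto intro: has_vector_derivative_within_subset[where S="{0..}"])
  show ?thesis
  proof (intro allI impI)
    fix t :: real assume "t \<ge> 0"
    define X where "X s = (SOME y. solution_on t y \<and> y 0 = u2 0 + s *\<^sub>R (u1 0 - u2 0))" for s
    have X: "solution_on t (X s) \<and> X s 0 = u2 0 + s *\<^sub>R (u1 0 - u2 0)" if "s \<in> {0..1}" for s
      unfolding X_def using solutions_exist_on_segment[OF \<open>t \<ge> 0\<close> solution[OF u2_sol] that]
      by (rule someI_ex)
    have "solution_on t (X 1)" "X 1 0 = u1 0" "solution_on t (X 0)" "X 0 0 = u2 0"
      using X[of 1] X[of 0] by simp_all
    then have "X 1 t = u1 t" "X 0 t = u2 t"
      using solution_unique[OF solution[OF u1_sol], of t "X 1" t]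
        solution_unique[OF solution[OF u2_sol], of t "X 0" t] \<open>t \<ge> 0\<close> by simp_all
    then show "norm (u1 t - u2 t) \<le> C\<^sup>2 * exp (lam * t) * norm (u1 0 - u2 0)"
      using solution_family_diff_le[OF \<open>t \<ge> 0\<close> zero_le_one X, of t] \<open>t \<ge> 0\<close>
      by (simp add: power2_eq_square)
  qed
qed

end
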